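(* Consider the system of ordinary differential equations, for $t\ge 0$, \begin{align*} \dot S &= \Lambda + \omega m Q - \big[\lambda(t)(1-p) + \phi p + \mu\big] S,\\ \dot A &= \lambda(t)(1-p) S - (q\upsilon+\mu) A,\\ \dot I &= q\upsilon A - (\delta_1+\mu) I,\\ \dot Q &= \phi p S + \delta_1 f_1 I + \delta_2(1-f_2-f_3) H - (\omega m+\mu) Q,\\ \dot H &= \delta_1(1-f_1) I + \eta(1-\kappa) H_{IC} - \big[\delta_2(1-f_2-f_3) + \delta_2 f_2 + \alpha_1 f_3 + \mu\big] H,\\ \dot H_{IC} &= \delta_2 f_2 H - \big[\eta(1-\kappa) + \alpha_2\kappa + \mu\big] H_{IC}, \end{align*} where $N(t)=S+A+I+Q+H+H_{IC}$ and $\lambda(t)=\beta\,[A(t)+I(t)+l_H H(t)]/N(t)$. Set $a_0=q\upsilon+\mu$, $a_1=\delta_1+\mu$, $a_2=m\omega+\mu$, $a_3=\delta_2(1-f_2-f_3)+\delta_2 f_2+\alpha_1 f_3+\mu$, $a_6=\delta_1(1-f_1)$, $\eta_\kappa=\eta(1-\kappa)$, $a_7=\alpha_2\kappa+\eta_\kappa+\mu$, $\chi=a_3a_7-\delta_2\eta_\kappa f_2$, and define $$R_0=\frac{\beta\, a_2\,(1-p)\Big[\big(l_H\, a_6\, q\upsilon+(a_1+q\upsilon)a_3\big)a_7-\delta_2\,\eta_\kappa\, f_2\,(q\upsilon+a_1)\Big]}{a_0\,a_1\,\chi\,(p\phi+a_2)}.$$ Then the disease-free equilibrium $$\Sigma_0=\Big(\frac{\Lambda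 a_2}{(p\phi+a_2)\mu},\,0,\,0,\,\frac{p\phi\Lambda}{(p\phi+a_2)\mu},\,0,\,0\Big)$$ (in the order $(S,A,I,Q,H,H_{IC})$) is locally asymptotically stable if $R_0<1$ and unstable if $R_0>1$.
   Context: This is a compartmental COVID-19 model (susceptible $S$, asymptomatic infected $A$, symptomatic infected $I$, quarantined $Q$, hospitalized $H$, hospitalized in intensive care $H_{IC}$). All parameters are non-negative: $\Lambda>0$, $\mu>0$, $\beta>0$, $l_H>0$, $\phi,\upsilon,\delta_1,\delta_2,\eta,\omega,\alpha_1,\alpha_2>0$, and $p,q,f_1,f_2,f_3,\kappa,m\in[0,1]$ with $1-f_2-f_3\in[0,1]$. The relative transmissibility of class $A$ is taken equal to $1$. $R_0$ is called the basic reproduction number. *)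

theory Defs
  imports "HOL-Analysis.Analysis"
begin

text \<open>State vector in the order (S, A, I, Q, H, H_IC).\<close>
type_synonym state = "real \<times> real \<times> real \<times> real \<times> real \<times> real"

record covid_params =
  c_Lambda :: real
  c_mu :: real
  c_beta :: real
  c_lH :: real
  c_phi :: real
  c_upsilon :: real
  c_delta1 :: real
  c_delta2 :: real
  c_eta :: real
  c_omega :: real
  c_alpha1 :: real
  c_alpha2 :: real
  c_p :: real
  c_q :: real
  c_f1 :: real
  c_f2 :: real
  c_f3 :: real
  c_kappa :: real
  c_m :: real

definition admissible_params :: "covid_params \<Rightarrow> bool" where
  "admissible_params P \<longleftrightarrow>
     c_Lambda P > 0 \<and> c_mu P > 0 \<and> c_beta P > 0 \<and> c_lH P > 0 \<and>
     c_phi P > 0 \<and> c_upsilon P > 0 \<and> c_delta1 P > 0 \<and> c_delta2 P > 0 \<and>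
     c_eta P > 0 \<and> c_omega P > 0 \<and> c_alpha1 P > 0 \<and> c_alpha2 P > 0 \<and>
     c_p P \<in> {0..1} \<and> c_q P \<in> {0..1} \<and> c_f1 P \<in> {0..1} \<and> c_f2 P \<in> {0..1} \<and>
     c_f3 P \<in> {0..1} \<and> c_kappa P \<in> {0..1} \<and> c_m P \<in> {0..1} \<and>
     1 - c_f2 P - c_f3 P \<in> {0..1}"

definition covid_field :: "covid_params \<Rightarrow> state \<Rightarrow> state" where
  "covid_field P X = (case X of (S, A, I, Q, H, HIC) \<Rightarrow>
     let N = S + A + I + Q + H + HIC;
         lam = c_beta P * (A + I + c_lH P * H) / N;
         \<Lambda> = c_Lambda P; \<mu> = c_mu P; \<phi> = c_phi P; \<upsilon> = c_upsilon P;
         \<delta>1 = c_delta1 P; \<delta>2 = c_delta2 P; \<eta> = c_eta P; \<omega> = c_omega P;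
         \<alpha>1 = c_alpha1 P; \<alpha>2 = c_alpha2 P; p = c_p P; q = c_q P;
         f1 = c_f1 P; f2 = c_f2 P; f3 = c_f3 P; \<kappa> = c_kappa P; m = c_m P
     in ( \<Lambda> + \<omega> * m * Q - (lam * (1 - p) + \<phi> * p + \<mu>) * S,
          lam * (1 - p) * S - (q * \<upsilon> + \<mu>) * A,
          q * \<upsilon> * A - (\<delta>1 + \<mu>) * I,
          \<phi> * p * S + \<delta>1 * f1 * I + \<delta>2 * (1 - f2 - f3) * H - (\<omega> * m + \<mu>) * Q,
          \<delta>1 * (1 - f1) * I + \<eta> * (1 - \<kappa>) * HIC
            - (\<delta>2 * (1 - f2 - f3) + \<delta>2 * f2 + \<alpha>1 * f3 + \<mu>) * H,
          \<delta>2 * f2 * H - (\<eta> * (1 - \<kappa>) + \<alpha>2 * \<kappa> + \<mu>) * HIC))"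

definition R0 :: "covid_params \<Rightarrow> real" where
  "R0 P = (let \<mu> = c_mu P; \<beta> = c_beta P; lH = c_lH P; \<phi> = c_phi P; \<upsilon> = c_upsilon P;
         \<delta>1 = c_delta1 P; \<delta>2 = c_delta2 P; \<eta> = c_eta P; \<omega> = c_omega P;
         \<alpha>1 = c_alpha1 P; \<alpha>2 = c_alpha2 P; p = c_p P; q = c_q P;
         f1 = c_f1 P; f2 = c_f2 P; f3 = c_f3 P; \<kappa> = c_kappa P; m = c_m P;
         a0 = q * \<upsilon> + \<mu>; a1 = \<delta>1 + \<mu>; a2 = m * \<omega> + \<mu>;
         a3 = \<delta>2 * (1 - f2 - f3) + \<delta>2 * f2 + \<alpha>1 * f3 + \<mu>;
         a6 = \<delta>1 * (1 - f1); \<eta>\<kappa> = \<eta> * (1 - \<kappa>); a7 = \<alpha>2 * \<kappa> + \<eta>\<kappa> + \<mu>;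
         chi = a3 * a7 - \<delta>2 * \<eta>\<kappa> * f2
     in \<beta> * a2 * (1 - p) * ((lH * a6 * q * \<upsilon> + (a1 + q * \<upsilon>) * a3) * a7
                               - \<delta>2 * \<eta>\<kappa> * f2 * (q * \<upsilon> + a1))
        / (a0 * a1 * chi * (p * \<phi> + a2)))"

definition DFE :: "covid_params \<Rightarrow> state" where
  "DFE P = (let \<Lambda> = c_Lambda P; \<mu> = c_mu P; \<phi> = c_phi P; p = c_p P;
               a2 = c_m P * c_omega P + \<mu>
            in (\<Lambda> * a2 / ((p * \<phi> + a2) * \<mu>), 0, 0, p * \<phi> * \<Lambda> / ((p * \<phi> + a2) * \<mu>), 0, 0))"

definition is_solution_on :: "('a::real_normed_vector \<Rightarrow> 'a) \<Rightarrow> real set \<Rightarrow> (real \<Rightarrow> 'a) \<Rightarrow> bool" where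
  "is_solution_on F T x \<longleftrightarrow> (\<forall>t\<in>T. (x has_vector_derivative F (x t)) (at t within T))"

definition lyapunov_stable :: "('a::real_normed_vector \<Rightarrow> 'a) \<Rightarrow> 'a \<Rightarrow> bool" where
  "lyapunov_stable F e \<longleftrightarrow>
     (\<forall>\<epsilon>>0. \<exists>\<delta>>0. \<forall>T\<ge>0. \<forall>x. is_solution_on F {0..T} x \<and> dist (x 0) e < \<delta>
        \<longrightarrow> (\<forall>t\<in>{0..T}. dist (x t) e < \<epsilon>))"

definition locally_asymptotically_stable :: "('a::real_normed_vector \<Rightarrow> 'a) \<Rightarrow> 'a \<Rightarrow> bool" where
  "locally_asymptotically_stable F e \<longleftrightarrow>
     F e = 0 \<and> lyapunov_stable F e \<and>
     (\<exists>\<delta>>0. \<forall>x0. dist x0 e < \<delta> \<longrightarrow>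
        (\<exists>x. is_solution_on F {0..} x \<and> x 0 = x0) \<and>
        (\<forall>x. is_solution_on F {0..} x \<and> x 0 = x0 \<longrightarrow> (x \<longlongrightarrow> e) at_top))"

definition unstable_equilibrium :: "('a::real_normed_vector \<Rightarrow> 'a) \<Rightarrow> 'a \<Rightarrow> bool" where
  "unstable_equilibrium F e \<longleftrightarrow> F e = 0 \<and> \<not> lyapunov_stable F e"

end

theory Submission
  imports Defs "HOL-Real_Asymp.Real_Asymp"
begin

text \<open>Near the disease-free equilibrium the infected compartments \<open>A, I, H, H\<^sub>I\<^sub>C\<close> obey, to first
  order, a linear system with a Metzler matrix \<open>M\<close>; the nonlinearity enters only through the coefficient
  \<open>\<beta> (1 - p) S / N\<close> of the infection term, which tends to its equilibrium value \<open>c0\<close>.  If \<open>R0 < 1\<close>,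
  \<open>M\<close> has positive vectors \<open>v\<close>, \<open>w\<close> with \<open>M v < 0\<close> and \<open>w\<^sup>T M < 0\<close>, which give a diagonal quadratic
  Lyapunov function for \<open>M\<close>.  Adding a quadratic form in the deviations of \<open>S + Q\<close> and \<open>Q\<close>, whose
  equations are linear apart from the infection term, yields \<open>V\<close> with \<open>V' \<le> - \<alpha> V\<close> near the
  equilibrium; solutions exist for all time by Picard iteration for a truncation of the locally Lipschitz
  field.  If \<open>R0 > 1\<close>, a positive linear functional of the infected compartments grows exponentially along
  every solution that stays near the equilibrium and starts with positive infected compartments,
  contradicting Lyapunov stability.\<close>

section \<open>Linear differential inequalities and solutions\<close>

lemma exp_bound_of_deriv_le:
  fixes f :: "real \<Rightarrow> real"
  assumes "a \<le> b" and "continuous_on {a..b} f"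
    and deriv: "\<And>t. a < t \<Longrightarrow> t < b \<Longrightarrow> \<exists>d. (f has_real_derivative d) (at t) \<and> d \<le> k * f t"
  shows "f b \<le> f a * exp (k * (b - a))"
proof -
  define g where "g t = f t * exp (- (k * t))" for t
  have "g b \<le> g a"
  proof (rule DERIV_nonpos_imp_decreasing_open[OF \<open>a \<le> b\<close>])
    fix t assume "a < t" "t < b"
    then obtain d where d: "(f has_real_derivative d) (at t)" "d \<le> k * f t" using deriv by blast
    have "(g has_real_derivative (d - k * f t) * exp (- (k * t))) (at t)"
      unfolding g_def using d(1) by (auto intro!: derivative_eq_intros simp: algebra_simps)
    moreover have "(d - k * f t) * exp (- (k * t)) \<le> 0" using d(2) by (simp add: mult_nonpos_nonneg)
    ultimately show "\<exists>y. (g has_real_derivative y) (at t) \<and> y \<le> 0" by blast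
  qed (unfold g_def, intro continuous_intros assms(2))
  then have "f b * exp (- (k * b)) * exp (k * b) \<le> f a * exp (- (k * a)) * exp (k * b)"
    unfolding g_def by (rule mult_right_mono) simp
  then show ?thesis by (simp add: mult.assoc exp_add[symmetric] algebra_simps)
qed

lemma exp_bound_of_deriv_ge:
  fixes f :: "real \<Rightarrow> real"
  assumes "a \<le> b" and "continuous_on {a..b} f"
    and deriv: "\<And>t. a < t \<Longrightarrow> t < b \<Longrightarrow> \<exists>d. (f has_real_derivative d) (at t) \<and> d \<ge> k * f t"
  shows "f b \<ge> f a * exp (k * (b - a))"
proof -
  have "(\<lambda>t. - f t) b \<le> (\<lambda>t. - f t) a * exp (k * (b - a))"
  proof (rule exp_bound_of_deriv_le[OF \<open>a \<le> b\<close>])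
    show "continuous_on {a..b} (\<lambda>t. - f t)" by (intro continuous_intros assms(2))
    fix t assume "a < t" "t < b"
    then obtain d where "(f has_real_derivative d) (at t)" "d \<ge> k * f t" using deriv by blast
    then show "\<exists>d. ((\<lambda>t. - f t) has_real_derivative d) (at t) \<and> d \<le> k * - f t"
      by (intro exI[of _ "- d"]) (auto intro!: derivative_eq_intros)
  qed
  then show ?thesis by simp
qed

lemma exp_growth_exceeds:
  fixes c r B :: real
  assumes "c > 0" "r > 0"
  obtains t where "t \<ge> 0" "c * exp (r * t) > B"
proof
  define t where "t = max 0 (B / (c * r))"
  show "t \<ge> 0" unfolding t_def by simp
  have "B = c * r * (B / (c * r))" using assms by simp
  also have "\<dots> \<le> c * r * t" using assms unfolding t_def by (intro mult_left_mono) auto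
  also have "\<dots> < c * (1 + r * t)" using assms by (simp add: algebra_simps)
  also have "\<dots> \<le> c * exp (r * t)" using assms exp_ge_add_one_self[of "r * t"] by simp
  finally show "c * exp (r * t) > B" .
qed

lemma first_crossing:
  fixes f :: "real \<Rightarrow> real"
  assumes "a \<le> b" and f_cont: "continuous_on {a..b} f" and "f a < c" and "c \<le> f b"
  shows "\<exists>\<tau>\<in>{a..b}. a < \<tau> \<and> f \<tau> = c \<and> (\<forall>s\<in>{a..<\<tau>}. f s < c)"
proof -
  define S where "S = {a..b} \<inter> f -` {c..}"
  have "closed S" unfolding S_def by (rule continuous_closed_preimage[OF f_cont]) auto
  moreover have "b \<in> S" unfolding S_def using assms by auto
  moreover have bdd: "bdd_below S" unfolding S_def by (rule bdd_belowI[of _ a]) auto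
  ultimately have "Inf S \<in> S" using closed_contains_Inf by blast
  define \<tau> where "\<tau> = Inf S"
  have \<tau>: "\<tau> \<in> {a..b}" "c \<le> f \<tau>" using \<open>Inf S \<in> S\<close> unfolding \<tau>_def S_def by auto
  have below: "f s < c" if "s \<in> {a..<\<tau>}" for s
  proof (rule ccontr)
    assume "\<not> f s < c"
    then have "s \<in> S" unfolding S_def using that \<tau> by auto
    then have "\<tau> \<le> s" unfolding \<tau>_def by (rule cInf_lower[OF _ bdd])
    then show False using that by auto
  qed
  have "a < \<tau>" using \<tau> \<open>f a < c\<close> by (cases "a = \<tau>") auto
  have "closed ({a..\<tau>} \<inter> f -` {..c})"
    by (rule continuous_closed_preimage[OF continuous_on_subset[OF f_cont]]) (use \<tau> in auto)
  moreover have "{a..<\<tau>} \<subseteq> {a..\<tau>} \<inter> f -` {..c}" using below by (auto simp: less_imp_le)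
  ultimately have "closure {a..<\<tau>} \<subseteq> {a..\<tau>} \<inter> f -` {..c}" by (rule closure_minimal[rotated])
  moreover have "\<tau> \<in> closure {a..<\<tau>}" using \<open>a < \<tau>\<close> by simp
  ultimately have "f \<tau> \<le> c" by auto
  then show ?thesis using \<tau> below \<open>a < \<tau>\<close> by (intro bexI[of _ \<tau>]) auto
qed

lemma is_solution_on_continuous:
  "is_solution_on F T x \<Longrightarrow> continuous_on T x"
  unfolding is_solution_on_def
  by (auto simp: continuous_on_eq_continuous_within intro: has_vector_derivative_continuous)

lemma is_solution_on_subset:
  "is_solution_on F S x \<Longrightarrow> T \<subseteq> S \<Longrightarrow> is_solution_on F T x"
  unfolding is_solution_on_def by (auto intro: has_vector_derivative_within_subset)

lemma is_solution_on_interior: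
  assumes "is_solution_on F {0..T} x" "0 < t" "t < T"
  shows "(x has_vector_derivative F (x t)) (at t)"
proof -
  have "(x has_vector_derivative F (x t)) (at t within {0..T})"
    using assms unfolding is_solution_on_def by simp
  moreover have "at t within {0..T} = at t" using assms by (intro at_within_interior) auto
  ultimately show ?thesis by simp
qed

lemma is_solution_on_transfer:
  "is_solution_on G T x \<Longrightarrow> (\<And>t. t \<in> T \<Longrightarrow> G (x t) = F (x t)) \<Longrightarrow> is_solution_on F T x"
  unfolding is_solution_on_def by simp

section \<open>Global solutions of truncated fields\<close>

lemma continuous_on_integral_upto_max0:
  fixes g :: "real \<Rightarrow> 'a::banach"
  assumes "continuous_on UNIV g"
  shows "continuous_on UNIV (\<lambda>t. integral {0..max 0 t} g)"
proof -
  have "continuous (at t within {0..}) (\<lambda>u. integral {0..u} g)" if "t \<ge> 0" for t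
  proof -
    have "((\<lambda>u. integral {0..u} g) has_vector_derivative g t) (at t within {0..t+1})"
      using that by (intro integral_has_vector_derivative continuous_on_subset[OF assms]) auto
    moreover have "at t within {0..t+1} = at t within {0..}"
      by (rule at_within_nhd[where S="{..<t+1}"]) auto
    ultimately show ?thesis using has_vector_derivative_continuous by fastforce
  qed
  then have "continuous_on {0..} (\<lambda>u. integral {0..u} g)"
    by (simp add: continuous_on_eq_continuous_within)
  then have "continuous_on UNIV ((\<lambda>u. integral {0..u} g) \<circ> (\<lambda>t. max 0 t))"
    by (intro continuous_on_compose continuous_intros) (auto intro: continuous_on_subset)
  then show ?thesis by (simp add: o_def)
qed

text \<open>Picard operator for the rescaled unknown \<open>y t = exp (- 2 L t) x t\<close>, frozen for \<open>t < 0\<close>.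
  The exponential weight makes it a \<open>1/2\<close>-contraction for the sup norm on all of \<open>[0, \<infinity>)\<close>.\<close>
definition weighted_picard :: "('a::banach \<Rightarrow> 'a) \<Rightarrow> real \<Rightarrow> 'a \<Rightarrow> (real \<Rightarrow> 'a) \<Rightarrow> real \<Rightarrow> 'a" where
  "weighted_picard G L x0 y t =
     exp (- (2 * L * max 0 t)) *\<^sub>R (x0 + integral {0..max 0 t} (\<lambda>s. G (exp (2 * L * s) *\<^sub>R y s)))"

lemma weighted_picard_bcontfun:
  fixes G :: "'a::banach \<Rightarrow> 'a"
  assumes G_cont: "continuous_on UNIV G" and bound: "\<And>x. norm (G x) \<le> B"
    and "L > 0" and y_cont: "continuous_on UNIV y"
  shows "weighted_picard G L x0 y \<in> bcontfun"
proof (rule bcontfun_normI)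
  let ?g = "\<lambda>s. G (exp (2 * L * s) *\<^sub>R y s)"
  have g_cont: "continuous_on UNIV ?g"
    by (rule continuous_on_compose2[OF G_cont]) (auto intro!: continuous_intros y_cont)
  show "continuous_on UNIV (weighted_picard G L x0 y)"
    unfolding weighted_picard_def by (intro continuous_intros continuous_on_integral_upto_max0 g_cont)
  fix t :: real
  define \<tau> where "\<tau> = max 0 t"
  have "\<tau> \<ge> 0" "B \<ge> 0" unfolding \<tau>_def using bound[of 0] norm_ge_zero[of "G 0"] by linarith+
  have "norm (integral {0..\<tau>} ?g) \<le> B * (\<tau> - 0)"
    by (rule integral_bound) (auto intro: continuous_on_subset[OF g_cont] bound \<open>\<tau> \<ge> 0\<close>)
  then have "norm (x0 + integral {0..\<tau>} ?g) \<le> norm x0 + B * \<tau>"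
    by (smt (verit) norm_triangle_ineq)
  moreover have "exp (- (2 * L * \<tau>)) * \<tau> \<le> 1 / (2 * L)"
  proof -
    have "2 * L * \<tau> \<le> exp (2 * L * \<tau>)" using exp_ge_add_one_self[of "2 * L * \<tau>"] by linarith
    then show ?thesis using \<open>L > 0\<close> by (simp add: exp_minus field_simps)
  qed
  moreover have "exp (- (2 * L * \<tau>)) \<le> 1" using \<open>L > 0\<close> \<open>\<tau> \<ge> 0\<close> by simp
  ultimately have "exp (- (2 * L * \<tau>)) * norm (x0 + integral {0..\<tau>} ?g)
      \<le> exp (- (2 * L * \<tau>)) * (norm x0 + B * \<tau>)"
    by (intro mult_left_mono) simp_all
  also have "\<dots> = exp (- (2 * L * \<tau>)) * norm x0 + B * (exp (- (2 * L * \<tau>)) * \<tau>)"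
    by (simp add: algebra_simps)
  also have "\<dots> \<le> 1 * norm x0 + B * (1 / (2 * L))"
    using \<open>B \<ge> 0\<close> \<open>exp (- (2 * L * \<tau>)) \<le> 1\<close> \<open>exp (- (2 * L * \<tau>)) * \<tau> \<le> 1 / (2 * L)\<close>
    by (intro add_mono mult_right_mono mult_left_mono) simp_all
  finally show "norm (weighted_picard G L x0 y t) \<le> norm x0 + B / (2 * L)"
    unfolding weighted_picard_def \<tau>_def[symmetric] by simp
qed

lemma weighted_picard_contraction:
  fixes G :: "'a::banach \<Rightarrow> 'a"
  assumes lip: "\<And>x y. norm (G x - G y) \<le> L * norm (x - y)" and "L > 0"
    and cont: "continuous_on UNIV y" "continuous_on UNIV z"
    and close: "\<And>s. dist (y s) (z s) \<le> D"
  shows "dist (weighted_picard G L x0 y t) (weighted_picard G L x0 z t) \<le> D / 2"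
proof -
  define \<tau> where "\<tau> = max 0 t"
  have "\<tau> \<ge> 0" "D \<ge> 0" unfolding \<tau>_def using close[of 0] zero_le_dist[of "y 0" "z 0"] by linarith+
  have G_cont: "continuous_on UNIV G"
    by (rule lipschitz_on_continuous_on[of L]) (use \<open>L > 0\<close> lip in \<open>auto simp: lipschitz_on_def dist_norm\<close>)
  let ?gy = "\<lambda>s. G (exp (2 * L * s) *\<^sub>R y s)" and ?gz = "\<lambda>s. G (exp (2 * L * s) *\<^sub>R z s)"
  have "continuous_on UNIV ?gy" "continuous_on UNIV ?gz"
    by (rule continuous_on_compose2[OF G_cont]; auto intro!: continuous_intros cont)+
  then have int: "?gy integrable_on {0..\<tau>}" "?gz integrable_on {0..\<tau>}"
    by (auto intro!: integrable_continuous_interval intro: continuous_on_subset)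
  have "norm (integral {0..\<tau>} (\<lambda>s. ?gy s - ?gz s)) \<le> integral {0..\<tau>} (\<lambda>s. L * D * exp (2 * L * s))"
  proof (rule integral_norm_bound_integral)
    show "(\<lambda>s. ?gy s - ?gz s) integrable_on {0..\<tau>}" using int by (rule integrable_diff)
    show "(\<lambda>s. L * D * exp (2 * L * s)) integrable_on {0..\<tau>}"
      by (auto intro!: integrable_continuous_interval continuous_intros)
    fix s
    have "norm (?gy s - ?gz s) \<le> L * norm (exp (2 * L * s) *\<^sub>R y s - exp (2 * L * s) *\<^sub>R z s)"
      by (rule lip)
    also have "\<dots> = L * exp (2 * L * s) * dist (y s) (z s)"
      by (simp add: dist_norm scaleR_diff_right[symmetric])
    also have "\<dots> \<le> L * exp (2 * L * s) * D" using \<open>L > 0\<close> by (intro mult_left_mono close) auto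
    finally show "norm (?gy s - ?gz s) \<le> L * D * exp (2 * L * s)" by (simp add: mult_ac)
  qed
  also have "\<dots> = L * D * ((exp (2 * L * \<tau>) - 1) / (2 * L))"
  proof -
    have "((\<lambda>s. exp (2 * L * s)) has_integral exp (2 * L * \<tau>) / (2 * L) - exp (2 * L * 0) / (2 * L)) {0..\<tau>}"
      using \<open>L > 0\<close> \<open>\<tau> \<ge> 0\<close> by (intro fundamental_theorem_of_calculus)
        (auto intro!: derivative_eq_intros simp: has_real_derivative_iff_has_vector_derivative[symmetric])
    then show ?thesis by (simp add: integral_unique diff_divide_distrib)
  qed
  finally have "norm (integral {0..\<tau>} ?gy - integral {0..\<tau>} ?gz) \<le> L * D * ((exp (2 * L * \<tau>) - 1) / (2 * L))"
    by (simp add: integral_diff[OF int])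
  then have "exp (- (2 * L * \<tau>)) * norm (integral {0..\<tau>} ?gy - integral {0..\<tau>} ?gz)
      \<le> exp (- (2 * L * \<tau>)) * (L * D * ((exp (2 * L * \<tau>) - 1) / (2 * L)))"
    by (rule mult_left_mono) simp
  also have "\<dots> = D / 2 * (1 - exp (- (2 * L * \<tau>)))" using \<open>L > 0\<close> by (simp add: field_simps exp_minus)
  also have "\<dots> \<le> D / 2" using \<open>D \<ge> 0\<close> by (simp add: mult_left_le)
  finally show ?thesis
    unfolding weighted_picard_def dist_norm \<tau>_def[symmetric] by (simp add: scaleR_diff_right[symmetric])
qed

lemma bounded_lipschitz_global_solution:
  fixes G :: "'a::banach \<Rightarrow> 'a"
  assumes lip: "\<And>x y. norm (G x - G y) \<le> L * norm (x - y)" and "L > 0"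
    and bound: "\<And>x. norm (G x) \<le> B"
  shows "\<exists>x. x 0 = x0 \<and> is_solution_on G {0..} x"
proof -
  have G_cont: "continuous_on UNIV G"
    by (rule lipschitz_on_continuous_on[of L]) (use \<open>L > 0\<close> lip in \<open>auto simp: lipschitz_on_def dist_norm\<close>)
  define \<Phi> where "\<Phi> y = Bcontfun (weighted_picard G L x0 (apply_bcontfun y))" for y :: "real \<Rightarrow>\<^sub>C 'a"
  have \<Phi>_apply: "apply_bcontfun (\<Phi> y) = weighted_picard G L x0 (apply_bcontfun y)" for y
    unfolding \<Phi>_def
    by (rule Bcontfun_inverse[OF weighted_picard_bcontfun[OF G_cont bound \<open>L > 0\<close>]]) simp
  have "dist (\<Phi> y) (\<Phi> z) \<le> 1 / 2 * dist y z" for y z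
  proof (rule dist_bound)
    fix t
    have "dist (weighted_picard G L x0 y t) (weighted_picard G L x0 z t) \<le> dist y z / 2"
      by (rule weighted_picard_contraction[OF lip \<open>L > 0\<close>]) (auto intro: dist_bounded)
    then show "dist (apply_bcontfun (\<Phi> y) t) (apply_bcontfun (\<Phi> z) t) \<le> 1 / 2 * dist y z"
      unfolding \<Phi>_apply by simp
  qed
  then obtain y where fix_y: "\<Phi> y = y" using banach_fix_type[of "1/2" \<Phi>] by auto
  define x where "x t = exp (2 * L * t) *\<^sub>R apply_bcontfun y t" for t
  have x_eq: "x t = x0 + integral {0..t} (\<lambda>s. G (x s))" if "t \<ge> 0" for t
  proof -
    have "apply_bcontfun y t = weighted_picard G L x0 (apply_bcontfun y) t" using fix_y \<Phi>_apply by metis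
    then have "x t = exp (2 * L * t) *\<^sub>R (exp (- (2 * L * t)) *\<^sub>R (x0 + integral {0..t} (\<lambda>s. G (x s))))"
      unfolding x_def weighted_picard_def using that by simp
    then show ?thesis by (simp add: exp_minus)
  qed
  have Gx_cont: "continuous_on UNIV (\<lambda>s. G (x s))"
    unfolding x_def by (rule continuous_on_compose2[OF G_cont]) (auto intro!: continuous_intros)
  have "(x has_vector_derivative G (x t)) (at t within {0..})" if "t \<ge> 0" for t
  proof -
    have "((\<lambda>u. x0 + integral {0..u} (\<lambda>s. G (x s))) has_vector_derivative G (x t)) (at t within {0..t+1})"
      using that by (auto intro!: derivative_eq_intros integral_has_vector_derivative
          continuous_on_subset[OF Gx_cont])
    moreover have "at t within {0..t+1} = at t within {0..}"
      by (rule at_within_nhd[where S="{..<t+1}"]) auto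
    ultimately have "((\<lambda>u. x0 + integral {0..u} (\<lambda>s. G (x s))) has_vector_derivative G (x t)) (at t within {0..})"
      by simp
    then show ?thesis
      by (rule has_vector_derivative_transform_within[OF _ zero_less_one]) (use that x_eq in auto)
  qed
  moreover have "x 0 = x0" using x_eq[of 0] by simp
  ultimately show ?thesis unfolding is_solution_on_def by auto
qed

lemma lipschitz_truncation_global_solutions:
  fixes F :: "'a::euclidean_space \<Rightarrow> 'a"
  assumes F_lip: "L-lipschitz_on (cball e r) F" and "r \<ge> 0"
  obtains G where "\<And>X. dist X e \<le> r \<Longrightarrow> G X = F X"
    and "\<And>x0. \<exists>x. x 0 = x0 \<and> is_solution_on G {0..} x"
proof -
  let ?U = "cball e r"
  define G where "G X = F (closest_point ?U X)" for X
  have U: "convex ?U" "closed ?U" "?U \<noteq> {}" using \<open>r \<ge> 0\<close> by auto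
  have proj_in: "closest_point ?U X \<in> ?U" for X by (rule closest_point_in_set) (use U in auto)
  have agree: "G X = F X" if "dist X e \<le> r" for X
    unfolding G_def using that by (subst closest_point_self) (auto simp: dist_commute)
  have "L \<ge> 0" using F_lip lipschitz_on_nonneg by blast
  have G_lip: "norm (G x - G y) \<le> (L + 1) * norm (x - y)" for x y
  proof -
    have "dist (G x) (G y) \<le> L * dist (closest_point ?U x) (closest_point ?U y)"
      unfolding G_def by (rule lipschitz_onD[OF F_lip proj_in proj_in])
    also have "\<dots> \<le> L * dist x y"
      using \<open>L \<ge> 0\<close> closest_point_lipschitz[OF U] by (intro mult_left_mono) auto
    also have "\<dots> \<le> (L + 1) * dist x y" by (simp add: algebra_simps)
    finally show ?thesis by (simp add: dist_norm)
  qed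
  have "compact (F ` ?U)" by (rule compact_continuous_image[OF lipschitz_on_continuous_on[OF F_lip]]) simp
  then obtain B where "\<forall>y\<in>F ` ?U. norm y \<le> B" using compact_imp_bounded bounded_iff by metis
  then have G_bound: "norm (G x) \<le> B" for x unfolding G_def using proj_in by blast
  have "\<exists>x. x 0 = x0 \<and> is_solution_on G {0..} x" for x0
    using bounded_lipschitz_global_solution[OF G_lip _ G_bound] \<open>L \<ge> 0\<close> by simp
  with agree show ?thesis using that by blast
qed

lemma lyapunov_stable_truncation_stays_close:
  assumes stable: "lyapunov_stable F e" and "\<epsilon> > 0" and agree: "\<And>X. dist X e \<le> \<epsilon> \<Longrightarrow> G X = F X"
  obtains \<delta> where "\<delta> > 0"
    and "\<And>x t. is_solution_on G {0..} x \<Longrightarrow> dist (x 0) e < \<delta> \<Longrightarrow> t \<ge> 0 \<Longrightarrow> dist (x t) e < \<epsilon>"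
proof -
  obtain \<delta> where "\<delta> > 0" and \<delta>: "\<And>T x t. T \<ge> 0 \<Longrightarrow> is_solution_on F {0..T} x \<Longrightarrow> dist (x 0) e < \<delta>
      \<Longrightarrow> t \<in> {0..T} \<Longrightarrow> dist (x t) e < \<epsilon>"
    using stable \<open>\<epsilon> > 0\<close> unfolding lyapunov_stable_def by metis
  have stays: "dist (x t) e < \<epsilon>"
    if sol: "is_solution_on G {0..} x" and start: "dist (x 0) e < min \<delta> \<epsilon>" and "t \<ge> 0" for x t
  proof (rule ccontr)
    assume "\<not> dist (x t) e < \<epsilon>"
    have "continuous_on {0..t} x"
      by (rule is_solution_on_continuous[OF is_solution_on_subset[OF sol]]) auto
    then have "continuous_on {0..t} (\<lambda>s. dist (x s) e)" by (intro continuous_on_dist continuous_on_const)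
    then have "\<exists>\<tau>\<in>{0..t}. 0 < \<tau> \<and> dist (x \<tau>) e = \<epsilon> \<and> (\<forall>s\<in>{0..<\<tau>}. dist (x s) e < \<epsilon>)"
      by (rule first_crossing[OF \<open>t \<ge> 0\<close>]) (use start \<open>\<not> dist (x t) e < \<epsilon>\<close> in auto)
    then obtain \<tau> where \<tau>: "\<tau> \<in> {0..t}" "dist (x \<tau>) e = \<epsilon>" "\<forall>s\<in>{0..<\<tau>}. dist (x s) e < \<epsilon>"
      by blast
    have sol_F: "is_solution_on F {0..\<tau>} x"
    proof (rule is_solution_on_transfer[OF is_solution_on_subset[OF sol]])
      fix s assume s: "s \<in> {0..\<tau>}"
      have "dist (x s) e \<le> \<epsilon>"
      proof (cases "s = \<tau>")
        case False
        then have "s \<in> {0..<\<tau>}" using s by auto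
        then show ?thesis using \<tau>(3) by (simp add: less_imp_le)
      qed (use \<tau>(2) in simp)
      then show "G (x s) = F (x s)" by (rule agree)
    qed simp
    have "dist (x \<tau>) e < \<epsilon>" using \<delta>[of \<tau> x \<tau>] sol_F \<tau>(1) start by simp
    then show False using \<tau>(2) by simp
  qed
  have "min \<delta> \<epsilon> > 0" using \<open>\<delta> > 0\<close> \<open>\<epsilon> > 0\<close> by simp
  then show ?thesis using stays by (rule that)
qed

section \<open>Quadratic Lyapunov functions\<close>

text \<open>\<open>dV X Y\<close> plays the role of the derivative of \<open>V\<close> at \<open>X\<close> in direction \<open>Y\<close>.\<close>
locale quadratic_lyapunov =
  fixes F :: "'a::euclidean_space \<Rightarrow> 'a" and e :: 'a and V :: "'a \<Rightarrow> real" and dV :: "'a \<Rightarrow> 'a \<Rightarrow> real"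
    and \<rho> \<alpha> k K :: real
  assumes radius_pos: "\<rho> > 0" and rate_pos: "\<alpha> > 0" and lower_pos: "k > 0"
    and lower: "\<And>X. k * (dist X e)\<^sup>2 \<le> V X" and upper: "\<And>X. V X \<le> K * (dist X e)\<^sup>2"
    and V_continuous: "continuous_on UNIV V"
    and V_chain: "\<And>x t Y. (x has_vector_derivative Y) (at t) \<Longrightarrow>
      ((\<lambda>t. V (x t)) has_real_derivative dV (x t) Y) (at t)"
    and decrease: "\<And>X. dist X e < \<rho> \<Longrightarrow> dV X (F X) \<le> - \<alpha> * V X"
begin

lemma V_nonneg: "V X \<ge> 0"
proof -
  have "0 \<le> k * (dist X e)\<^sup>2" using lower_pos by simp
  then show ?thesis using lower[of X] by linarith
qed

lemma dist_less_of_V_less: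
  assumes "V X < k * r\<^sup>2" "r > 0"
  shows "dist X e < r"
proof -
  have "k * (dist X e)\<^sup>2 < k * r\<^sup>2" using lower[of X] assms by linarith
  then have "(dist X e)\<^sup>2 < r\<^sup>2" using lower_pos by simp
  then show ?thesis using assms by (simp add: power_less_imp_less_base)
qed

lemma V_small_near:
  assumes "m > 0"
  obtains \<delta> where "\<delta> > 0" "\<And>X. dist X e < \<delta> \<Longrightarrow> V X < k * m\<^sup>2"
proof
  define K' where "K' = max K 1"
  show "m * sqrt (k / (2 * K')) > 0" using assms lower_pos by (simp add: K'_def)
  fix X assume "dist X e < m * sqrt (k / (2 * K'))"
  then have "(dist X e)\<^sup>2 < (m * sqrt (k / (2 * K')))\<^sup>2" by (intro power_strict_mono) auto
  also have "\<dots> = m\<^sup>2 * k / (2 * K')" using lower_pos by (simp add: K'_def power_mult_distrib)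
  finally have "K' * (dist X e)\<^sup>2 < k * m\<^sup>2 / 2" by (simp add: K'_def field_simps)
  moreover have "K * (dist X e)\<^sup>2 \<le> K' * (dist X e)\<^sup>2" unfolding K'_def by (intro mult_right_mono) auto
  moreover have "0 < k * m\<^sup>2" using lower_pos assms by simp
  ultimately show "V X < k * m\<^sup>2" using upper[of X] by linarith
qed

lemma decay:
  assumes sol: "is_solution_on F {0..T} x" and start: "V (x 0) < k * \<rho>\<^sup>2" and t: "t \<in> {0..T}"
  shows "V (x t) \<le> V (x 0) * exp (- \<alpha> * t)"
proof -
  have V_cont: "continuous_on {0..T} (\<lambda>t. V (x t))"
    by (rule continuous_on_compose2[OF V_continuous is_solution_on_continuous[OF sol]]) auto
  have bound: "V (x t) \<le> V (x 0) * exp (- \<alpha> * t)"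
    if "t \<in> {0..T}" and small: "\<forall>s\<in>{0..<t}. V (x s) < k * \<rho>\<^sup>2" for t
  proof -
    have "V (x t) \<le> V (x 0) * exp (- \<alpha> * (t - 0))"
    proof (rule exp_bound_of_deriv_le)
      show "continuous_on {0..t} (\<lambda>t. V (x t))" by (rule continuous_on_subset[OF V_cont]) (use that in auto)
      fix s assume s: "0 < s" "s < t"
      have "((\<lambda>t. V (x t)) has_real_derivative dV (x s) (F (x s))) (at s)"
        by (rule V_chain[OF is_solution_on_interior[OF sol]]) (use s that in auto)
      moreover have "dV (x s) (F (x s)) \<le> - \<alpha> * V (x s)"
        using small s radius_pos by (intro decrease dist_less_of_V_less) auto
      ultimately show "\<exists>d. ((\<lambda>t. V (x t)) has_real_derivative d) (at s) \<and> d \<le> - \<alpha> * V (x s)" by blast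
    qed (use that in auto)
    then show ?thesis by simp
  qed
  have "V (x t) < k * \<rho>\<^sup>2" if "t \<in> {0..T}" for t
  proof (rule ccontr)
    assume "\<not> V (x t) < k * \<rho>\<^sup>2"
    have "continuous_on {0..t} (\<lambda>s. V (x s))" by (rule continuous_on_subset[OF V_cont]) (use that in auto)
    then have "\<exists>\<tau>\<in>{0..t}. 0 < \<tau> \<and> V (x \<tau>) = k * \<rho>\<^sup>2 \<and> (\<forall>s\<in>{0..<\<tau>}. V (x s) < k * \<rho>\<^sup>2)"
      by (rule first_crossing[rotated]) (use that start \<open>\<not> V (x t) < k * \<rho>\<^sup>2\<close> in auto)
    then obtain \<tau> where \<tau>: "\<tau> \<in> {0..t}" "V (x \<tau>) = k * \<rho>\<^sup>2" "\<forall>s\<in>{0..<\<tau>}. V (x s) < k * \<rho>\<^sup>2"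
      by blast
    have "V (x \<tau>) \<le> V (x 0) * exp (- \<alpha> * \<tau>)" using \<tau> that by (intro bound) auto
    also have "\<dots> \<le> V (x 0)" using \<tau> rate_pos V_nonneg by (simp add: mult_left_le)
    finally show False using \<tau> start by simp
  qed
  then show ?thesis using bound t by auto
qed

lemma stable: "lyapunov_stable F e"
  unfolding lyapunov_stable_def
proof (intro allI impI)
  fix \<epsilon> :: real assume "\<epsilon> > 0"
  define m where "m = min \<epsilon> \<rho>"
  have "m > 0" "m \<le> \<rho>" "m \<le> \<epsilon>" unfolding m_def using \<open>\<epsilon> > 0\<close> radius_pos by auto
  obtain \<delta> where "\<delta> > 0" and \<delta>: "\<And>X. dist X e < \<delta> \<Longrightarrow> V X < k * m\<^sup>2" using V_small_near[OF \<open>m > 0\<close>] by blast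
  have "dist (x t) e < \<epsilon>" if sol: "is_solution_on F {0..T} x" and "dist (x 0) e < \<delta>" and "t \<in> {0..T}" for x T t
  proof -
    have start: "V (x 0) < k * m\<^sup>2" using \<delta> that by blast
    also have "\<dots> \<le> k * \<rho>\<^sup>2" using lower_pos \<open>m > 0\<close> \<open>m \<le> \<rho>\<close> by (intro mult_left_mono power_mono) auto
    finally have "V (x t) \<le> V (x 0) * exp (- \<alpha> * t)" using decay that by blast
    also have "\<dots> \<le> V (x 0)" using that rate_pos V_nonneg by (simp add: mult_left_le)
    finally have "dist (x t) e < m" using start \<open>m > 0\<close> by (intro dist_less_of_V_less) auto
    then show ?thesis using \<open>m \<le> \<epsilon>\<close> by simp
  qed
  then show "\<exists>\<delta>>0. \<forall>T\<ge>0. \<forall>x. is_solution_on F {0..T} x \<and> dist (x 0) e < \<delta> \<longrightarrow> (\<forall>t\<in>{0..T}. dist (x t) e < \<epsilon>)"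
    using \<open>\<delta> > 0\<close> by blast
qed

lemma restrict:
  assumes "0 < r" "r \<le> \<rho>" and agree: "\<And>X. dist X e \<le> r \<Longrightarrow> G X = F X"
  shows "quadratic_lyapunov G e V dV r \<alpha> k K"
  using assms lower upper V_continuous V_chain decrease rate_pos lower_pos
  by unfold_locales auto

lemma locally_asymptotically_stable:
  assumes "F e = 0" and F_lip: "L-lipschitz_on (cball e r) F" and "r > 0"
  shows "locally_asymptotically_stable F e"
proof -
  define r' where "r' = min r \<rho>"
  have "r' > 0" "r' \<le> \<rho>" unfolding r'_def using \<open>r > 0\<close> radius_pos by auto
  have "L-lipschitz_on (cball e r') F"
    by (rule lipschitz_on_subset[OF F_lip]) (simp add: r'_def subset_cball)
  then obtain G where agree: "\<And>X. dist X e \<le> r' \<Longrightarrow> G X = F X"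
    and G_sol: "\<And>x0. \<exists>x. x 0 = x0 \<and> is_solution_on G {0..} x"
    using lipschitz_truncation_global_solutions \<open>r' > 0\<close> less_imp_le by metis
  interpret G: quadratic_lyapunov G e V dV r' \<alpha> k K by (rule restrict[OF \<open>r' > 0\<close> \<open>r' \<le> \<rho>\<close> agree])
  obtain \<delta> where "\<delta> > 0" and \<delta>: "\<And>X. dist X e < \<delta> \<Longrightarrow> V X < k * r'\<^sup>2"
    using V_small_near[OF \<open>r' > 0\<close>] by blast
  have k_le: "k * r'\<^sup>2 \<le> k * \<rho>\<^sup>2" using lower_pos \<open>r' > 0\<close> \<open>r' \<le> \<rho>\<close> by (intro mult_left_mono power_mono) auto
  have "(\<exists>x. is_solution_on F {0..} x \<and> x 0 = x0) \<and>
      (\<forall>x. is_solution_on F {0..} x \<and> x 0 = x0 \<longrightarrow> (x \<longlongrightarrow> e) at_top)" if "dist x0 e < \<delta>" for x0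
  proof (intro conjI allI impI)
    have start: "V x0 < k * r'\<^sup>2" using \<delta> that .
    obtain x where "x 0 = x0" and sol: "is_solution_on G {0..} x" using G_sol by blast
    have "dist (x t) e < r'" if "t \<ge> 0" for t
    proof -
      have "is_solution_on G {0..t} x" by (rule is_solution_on_subset[OF sol]) auto
      then have "V (x t) \<le> V (x 0) * exp (- \<alpha> * t)"
        by (rule G.decay) (use start \<open>x 0 = x0\<close> that in auto)
      also have "\<dots> \<le> V (x 0)" using that rate_pos V_nonneg by (simp add: mult_left_le)
      finally show ?thesis using start \<open>x 0 = x0\<close> \<open>r' > 0\<close> by (intro dist_less_of_V_less) auto
    qed
    then have "is_solution_on F {0..} x" by (intro is_solution_on_transfer[OF sol] agree) (simp add: less_imp_le)
    then show "\<exists>x. is_solution_on F {0..} x \<and> x 0 = x0" using \<open>x 0 = x0\<close> by blast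
  next
    fix y assume y: "is_solution_on F {0..} y \<and> y 0 = x0"
    have "V x0 < k * \<rho>\<^sup>2" using \<delta>[OF that] k_le by linarith
    then have bound: "dist (y t) e \<le> sqrt (V x0 / k * exp (- \<alpha> * t))" if "t \<ge> 0" for t
    proof -
      have "is_solution_on F {0..t} y" by (rule is_solution_on_subset) (use y in auto)
      then have "V (y t) \<le> V (y 0) * exp (- \<alpha> * t)"
        by (rule decay) (use y \<open>V x0 < k * \<rho>\<^sup>2\<close> that in auto)
      then have "k * (dist (y t) e)\<^sup>2 \<le> V x0 * exp (- \<alpha> * t)" using lower[of "y t"] y by simp
      then have "(dist (y t) e)\<^sup>2 \<le> V x0 / k * exp (- \<alpha> * t)" using lower_pos by (simp add: field_simps)
      then show ?thesis by (rule real_le_rsqrt)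
    qed
    have "((\<lambda>t. dist (y t) e) \<longlongrightarrow> 0) at_top"
    proof (rule tendsto_sandwich[of "\<lambda>_. 0" _ _ "\<lambda>t. sqrt (V x0 / k * exp (- \<alpha> * t))"])
      show "\<forall>\<^sub>F t in at_top. dist (y t) e \<le> sqrt (V x0 / k * exp (- \<alpha> * t))"
        using eventually_ge_at_top[of 0] by eventually_elim (rule bound)
      have "((\<lambda>t. exp (- \<alpha> * t)) \<longlongrightarrow> 0) at_top" using rate_pos by real_asymp
      then show "((\<lambda>t. sqrt (V x0 / k * exp (- \<alpha> * t))) \<longlongrightarrow> 0) at_top"
        using tendsto_real_sqrt[OF tendsto_mult_right_zero[of _ _ "V x0 / k"]] by simp
    qed simp_all
    then show "(y \<longlongrightarrow> e) at_top" by (rule tendsto_dist_iff[THEN iffD2])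
  qed
  then show ?thesis
    unfolding locally_asymptotically_stable_def using \<open>F e = 0\<close> stable \<open>\<delta> > 0\<close> by blast
qed

end

definition lipschitzian_on :: "'a::metric_space set \<Rightarrow> ('a \<Rightarrow> 'b::metric_space) \<Rightarrow> bool" where
  "lipschitzian_on U f \<longleftrightarrow> (\<exists>L. L-lipschitz_on U f)"

lemma lipschitzian_on_const: "lipschitzian_on U (\<lambda>x. c)"
  unfolding lipschitzian_on_def using lipschitz_on_constant by blast

lemma lipschitzian_on_add:
  "lipschitzian_on U f \<Longrightarrow> lipschitzian_on U g \<Longrightarrow> lipschitzian_on U (\<lambda>x. f x + g x :: 'b::real_normed_vector)"
  unfolding lipschitzian_on_def using lipschitz_on_add by blast

lemma lipschitzian_on_diff:
  "lipschitzian_on U f \<Longrightarrow> lipschitzian_on U g \<Longrightarrow> lipschitzian_on U (\<lambda>x. f x - g x :: 'b::real_normed_vector)"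
  unfolding lipschitzian_on_def using lipschitz_on_diff by blast

lemma lipschitzian_on_cmult: "lipschitzian_on U f \<Longrightarrow> lipschitzian_on U (\<lambda>x. c * f x :: real)"
  unfolding lipschitzian_on_def using lipschitz_on_cmult[of _ U f c] by auto

lemma lipschitzian_on_Pair:
  "lipschitzian_on U f \<Longrightarrow> lipschitzian_on U g \<Longrightarrow> lipschitzian_on U (\<lambda>x. (f x, g x))"
  unfolding lipschitzian_on_def using lipschitz_on_Pair by blast

lemma lipschitzian_on_bounded:
  fixes f :: "'a::metric_space \<Rightarrow> real"
  assumes "bounded U" "lipschitzian_on U f"
  obtains B where "B \<ge> 0" "\<And>x. x \<in> U \<Longrightarrow> \<bar>f x\<bar> \<le> B"
proof (cases "U = {}")
  case False
  then obtain x0 where "x0 \<in> U" by blast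
  obtain R where R: "\<And>x. x \<in> U \<Longrightarrow> dist x0 x \<le> R" using assms(1) bounded_any_center[of U x0] by auto
  obtain L where L: "L-lipschitz_on U f" using assms(2) unfolding lipschitzian_on_def by blast
  have "\<bar>f x\<bar> \<le> \<bar>f x0\<bar> + L * R" if "x \<in> U" for x
  proof -
    have "dist (f x0) (f x) \<le> L * dist x0 x" using lipschitz_onD[OF L \<open>x0 \<in> U\<close> that] .
    also have "\<dots> \<le> L * R" using R that lipschitz_on_nonneg[OF L] by (intro mult_left_mono) auto
    finally show ?thesis by (simp add: dist_real_def)
  qed
  moreover have "0 \<le> \<bar>f x0\<bar> + L * R"
    using R[OF \<open>x0 \<in> U\<close>] lipschitz_on_nonneg[OF L] by simp
  ultimately show ?thesis using that by blast
qed (use that in auto)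

lemma lipschitzian_on_mult:
  assumes U: "bounded U" and f: "lipschitzian_on U f" and g: "lipschitzian_on U g"
  shows "lipschitzian_on U (\<lambda>x. f x * g x :: real)"
proof -
  obtain Lf Lg where Lf: "Lf-lipschitz_on U f" and Lg: "Lg-lipschitz_on U g"
    using f g unfolding lipschitzian_on_def by blast
  obtain Bf Bg where Bf: "Bf \<ge> 0" "\<And>x. x \<in> U \<Longrightarrow> \<bar>f x\<bar> \<le> Bf" and Bg: "Bg \<ge> 0" "\<And>x. x \<in> U \<Longrightarrow> \<bar>g x\<bar> \<le> Bg"
    using lipschitzian_on_bounded[OF U f] lipschitzian_on_bounded[OF U g] by metis
  have "(Bf * Lg + Bg * Lf)-lipschitz_on U (\<lambda>x. f x * g x)"
  proof (rule lipschitz_onI)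
    fix x y assume "x \<in> U" "y \<in> U"
    have "f x * g x - f y * g y = f x * (g x - g y) + g y * (f x - f y)" by (simp add: algebra_simps)
    then have "\<bar>f x * g x - f y * g y\<bar> \<le> \<bar>f x\<bar> * \<bar>g x - g y\<bar> + \<bar>g y\<bar> * \<bar>f x - f y\<bar>"
      by (simp add: abs_mult[symmetric] abs_triangle_ineq)
    also have "\<dots> \<le> Bf * (Lg * dist x y) + Bg * (Lf * dist x y)"
      using lipschitz_onD[OF Lf \<open>x \<in> U\<close> \<open>y \<in> U\<close>] lipschitz_onD[OF Lg \<open>x \<in> U\<close> \<open>y \<in> U\<close>]
        Bf Bg \<open>x \<in> U\<close> \<open>y \<in> U\<close>
      by (intro add_mono mult_mono) (auto simp: dist_real_def)
    finally show "dist (f x * g x) (f y * g y) \<le> (Bf * Lg + Bg * Lf) * dist x y"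
      by (simp add: dist_real_def algebra_simps)
  next
    show "0 \<le> Bf * Lg + Bg * Lf" using Bf Bg lipschitz_on_nonneg[OF Lf] lipschitz_on_nonneg[OF Lg] by simp
  qed
  then show ?thesis unfolding lipschitzian_on_def by blast
qed

lemma lipschitzian_on_inverse:
  assumes f: "lipschitzian_on U f" and "m > 0" and bounded_below: "\<And>x. x \<in> U \<Longrightarrow> f x \<ge> m"
  shows "lipschitzian_on U (\<lambda>x. 1 / f x :: real)"
proof -
  obtain L where L: "L-lipschitz_on U f" using f unfolding lipschitzian_on_def by blast
  have "(L / m\<^sup>2)-lipschitz_on U (\<lambda>x. 1 / f x)"
  proof (rule lipschitz_onI)
    show "0 \<le> L / m\<^sup>2" using lipschitz_on_nonneg[OF L] by simp
    fix x y assume "x \<in> U" "y \<in> U"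
    then have "f x \<ge> m" "f y \<ge> m" using bounded_below by auto
    then have "\<bar>1 / f x - 1 / f y\<bar> = \<bar>f y - f x\<bar> / (f x * f y)"
      using \<open>m > 0\<close> by (simp add: field_simps abs_div)
    also have "\<dots> \<le> (L * dist x y) / (m * m)"
    proof (rule frac_le)
      show "\<bar>f y - f x\<bar> \<le> L * dist x y"
        using lipschitz_onD[OF L \<open>x \<in> U\<close> \<open>y \<in> U\<close>] by (simp add: dist_real_def abs_minus_commute)
      show "m * m \<le> f x * f y" using \<open>f x \<ge> m\<close> \<open>f y \<ge> m\<close> \<open>m > 0\<close> by (intro mult_mono) auto
    qed (use lipschitz_on_nonneg[OF L] \<open>m > 0\<close> in auto)
    finally show "dist (1 / f x) (1 / f y) \<le> L / m\<^sup>2 * dist x y"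
      by (simp add: dist_real_def power2_eq_square)
  qed
  then show ?thesis unfolding lipschitzian_on_def by blast
qed

section \<open>Inequalities for the linearised infected subsystem\<close>

lemma mult_le_weighted_squares:
  fixes a b x y :: real
  assumes "a > 0" "b > 0"
  shows "x * y \<le> b / (2 * a) * x\<^sup>2 + a / (2 * b) * y\<^sup>2"
proof -
  have "0 \<le> (b * x - a * y)\<^sup>2 / (2 * a * b)" using assms by simp
  also have "\<dots> = b / (2 * a) * x\<^sup>2 + a / (2 * b) * y\<^sup>2 - x * y"
    using assms by (simp add: field_simps power2_eq_square)
  finally show ?thesis by simp
qed

text \<open>Bounding each product \<open>x i * x j\<close> by weighted AM-GM with weights \<open>v j / v i\<close> leaves at most
  \<open>\<Sum>i. c i * (x i)\<^sup>2\<close>, where \<open>2 (v i)\<^sup>2 c i = w i (M v) i + v i (w\<^sup>T M) i < 0\<close>.\<close>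
lemma metzler_diagonal_lyapunov:
  fixes M :: "nat \<Rightarrow> nat \<Rightarrow> real" and v w :: "nat \<Rightarrow> real"
  assumes off_diag: "\<And>i j. i < n \<Longrightarrow> j < n \<Longrightarrow> i \<noteq> j \<Longrightarrow> M i j \<ge> 0"
    and v_pos: "\<And>i. i < n \<Longrightarrow> v i > 0" and w_pos: "\<And>i. i < n \<Longrightarrow> w i > 0"
    and right: "\<And>i. i < n \<Longrightarrow> (\<Sum>j<n. M i j * v j) < 0"
    and left: "\<And>j. j < n \<Longrightarrow> (\<Sum>i<n. w i * M i j) < 0"
  obtains \<sigma> where "\<sigma> > 0"
    and "\<And>x. (\<Sum>i<n. \<Sum>j<n. w i / v i * M i j * x i * x j) \<le> - \<sigma> * (\<Sum>i<n. (x i)\<^sup>2)"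
proof -
  define c where "c i = w i / (2 * (v i)\<^sup>2) * (\<Sum>j<n. M i j * v j) + 1 / (2 * v i) * (\<Sum>j<n. w j * M j i)"
    for i
  have "c i < 0" if "i < n" for i
  proof -
    have "w i / (2 * (v i)\<^sup>2) * (\<Sum>j<n. M i j * v j) < 0"
      using v_pos[OF that] w_pos[OF that] right[OF that] by (intro mult_pos_neg) simp_all
    moreover have "1 / (2 * v i) * (\<Sum>j<n. w j * M j i) < 0"
      using that v_pos left by (intro mult_pos_neg) auto
    ultimately show ?thesis unfolding c_def by simp
  qed
  define \<sigma> where "\<sigma> = Min (insert 1 ((\<lambda>i. - c i) ` {..<n}))"
  have "\<sigma> > 0" unfolding \<sigma>_def using \<open>\<And>i. i < n \<Longrightarrow> c i < 0\<close> by auto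
  have c_le: "c i \<le> - \<sigma>" if "i < n" for i
    using that unfolding \<sigma>_def by (smt (verit) Min_le finite_imageI finite_insert finite_lessThan imageI
        insertCI lessThan_iff)
  have "(\<Sum>i<n. \<Sum>j<n. w i / v i * M i j * x i * x j) \<le> - \<sigma> * (\<Sum>i<n. (x i)\<^sup>2)" for x
  proof -
    have pair: "w i / v i * M i j * x i * x j
        \<le> w i / v i * M i j * (v j / (2 * v i) * (x i)\<^sup>2 + v i / (2 * v j) * (x j)\<^sup>2)"
      if "i < n" "j < n" for i j
    proof (cases "i = j")
      case True
      then show ?thesis using v_pos[OF \<open>i < n\<close>] by (simp add: field_simps power2_eq_square)
    next
      case False
      have "x i * x j \<le> v j / (2 * v i) * (x i)\<^sup>2 + v i / (2 * v j) * (x j)\<^sup>2"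
        using that v_pos by (intro mult_le_weighted_squares) auto
      moreover have "w i / v i * M i j \<ge> 0"
        using off_diag[OF that False] v_pos[OF \<open>i < n\<close>] w_pos[OF \<open>i < n\<close>] by simp
      ultimately show ?thesis by (metis mult.assoc mult_left_mono)
    qed
    have expand: "w i / v i * M i j * (v j / (2 * v i) * (x i)\<^sup>2 + v i / (2 * v j) * (x j)\<^sup>2)
        = (x i)\<^sup>2 * (w i / (2 * (v i)\<^sup>2)) * (M i j * v j) + (x j)\<^sup>2 / (2 * v j) * (w i * M i j)"
      if "i < n" "j < n" for i j
      using v_pos[OF \<open>i < n\<close>] v_pos[OF \<open>j < n\<close>] by (simp add: field_simps power2_eq_square)
    have "(\<Sum>i<n. \<Sum>j<n. w i / v i * M i j * x i * x j)
        \<le> (\<Sum>i<n. \<Sum>j<n. w i / v i * M i j * (v j / (2 * v i) * (x i)\<^sup>2 + v i / (2 * v j) * (x j)\<^sup>2))"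
      by (intro sum_mono pair) auto
    also have "\<dots> = (\<Sum>i<n. \<Sum>j<n. (x i)\<^sup>2 * (w i / (2 * (v i)\<^sup>2)) * (M i j * v j)
        + (x j)\<^sup>2 / (2 * v j) * (w i * M i j))"
      by (intro sum.cong refl expand) auto
    also have "\<dots> = (\<Sum>i<n. \<Sum>j<n. (x i)\<^sup>2 * (w i / (2 * (v i)\<^sup>2)) * (M i j * v j))
        + (\<Sum>i<n. \<Sum>j<n. (x j)\<^sup>2 / (2 * v j) * (w i * M i j))"
      by (simp add: sum.distrib)
    also have "\<dots> = (\<Sum>i<n. c i * (x i)\<^sup>2)"
      by (subst (2) sum.swap) (simp add: c_def sum_distrib_left sum_divide_distrib sum.distrib algebra_simps)
    also have "\<dots> \<le> (\<Sum>i<n. - \<sigma> * (x i)\<^sup>2)" by (intro sum_mono mult_right_mono c_le) auto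
    finally show ?thesis by (simp add: sum_distrib_left)
  qed
  with \<open>\<sigma> > 0\<close> show ?thesis by (rule that)
qed

text \<open>Let \<open>M\<close> be the matrix of the linearised infected dynamics.  Solving the last three rows of
  \<open>M v = - \<epsilon>\<close> exactly leaves the first row \<open>c0 (1 + qv / a1 + \<dots>) - a0 + O(\<epsilon>)\<close>, negative for small \<open>\<epsilon>\<close>.
  The left vector is found in the same way from the columns.\<close>
lemma infected_right_test_vector:
  fixes c0 a0 a1 a3 a6 ek a7 qv lH b :: real
  assumes pos: "c0 \<ge> 0" "a0 > 0" "a1 > 0" "a3 > 0" "a6 \<ge> 0" "ek \<ge> 0" "a7 > 0" "qv \<ge> 0" "lH \<ge> 0" "b \<ge> 0"
    and chi_pos: "a3 * a7 - b * ek > 0"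
    and below: "c0 * (1 + qv / a1 + lH * a6 * qv * a7 / (a1 * (a3 * a7 - b * ek))) < a0"
  obtains vI vH vC where "vI > 0" "vH > 0" "vC > 0"
    "c0 - a0 + c0 * vI + c0 * lH * vH < 0" "qv - a1 * vI < 0" "a6 * vI - a3 * vH + ek * vC < 0"
    "b * vH - a7 * vC < 0"
proof -
  define chi where "chi = a3 * a7 - b * ek"
  have "chi > 0" using chi_pos chi_def by simp
  define r where "r = c0 * (1 + qv / a1 + lH * a6 * qv * a7 / (a1 * chi)) - a0"
  have "r < 0" using below unfolding r_def chi_def by simp
  define k where "k = c0 / a1 + c0 * lH * (a6 * a7 / a1 + a7 + ek) / chi"
  have "k \<ge> 0" unfolding k_def using pos \<open>chi > 0\<close> by simp
  define \<epsilon> where "\<epsilon> = - r / (2 * (1 + k))"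
  have "\<epsilon> > 0" unfolding \<epsilon>_def using \<open>r < 0\<close> \<open>k \<ge> 0\<close> by (intro divide_pos_pos) auto
  have "\<epsilon> * (1 + k) = - r / 2" unfolding \<epsilon>_def using \<open>k \<ge> 0\<close> by (simp add: field_simps)
  then have "r + \<epsilon> * k < 0" using \<open>r < 0\<close> \<open>\<epsilon> > 0\<close> by (simp add: algebra_simps)
  define vI where "vI = (qv + \<epsilon>) / a1"
  define vH where "vH = (a6 * vI * a7 + \<epsilon> * a7 + ek * \<epsilon>) / chi"
  define vC where "vC = (b * vH + \<epsilon>) / a7"
  have "vI > 0" unfolding vI_def using pos \<open>\<epsilon> > 0\<close> by simp
  moreover have "vH > 0" unfolding vH_def using pos \<open>\<epsilon> > 0\<close> \<open>chi > 0\<close> \<open>vI > 0\<close>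
    by (intro divide_pos_pos add_nonneg_pos add_pos_nonneg) auto
  moreover have "vC > 0" unfolding vC_def using pos \<open>\<epsilon> > 0\<close> \<open>vH > 0\<close> by (intro divide_pos_pos add_nonneg_pos) auto
  moreover have "c0 - a0 + c0 * vI + c0 * lH * vH < 0"
  proof -
    have "c0 - a0 + c0 * vI + c0 * lH * vH = r + \<epsilon> * k"
      unfolding r_def k_def vH_def vI_def using pos \<open>chi > 0\<close> by (simp add: field_simps)
    then show ?thesis using \<open>r + \<epsilon> * k < 0\<close> by simp
  qed
  moreover have "qv - a1 * vI < 0" unfolding vI_def using pos \<open>\<epsilon> > 0\<close> by (simp add: field_simps)
  moreover have "a6 * vI - a3 * vH + ek * vC < 0"
  proof -
    have "vH * chi = a6 * vI * a7 + \<epsilon> * a7 + ek * \<epsilon>" "vC * a7 = b * vH + \<epsilon>"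
      unfolding vH_def vC_def using \<open>chi > 0\<close> pos by simp_all
    then have "a7 * (a6 * vI - a3 * vH + ek * vC) = a7 * (- \<epsilon>)" unfolding chi_def by algebra
    then have "a6 * vI - a3 * vH + ek * vC = - \<epsilon>" using \<open>a7 > 0\<close> by (metis mult_cancel_left less_irrefl)
    then show ?thesis using \<open>\<epsilon> > 0\<close> by simp
  qed
  moreover have "b * vH - a7 * vC < 0" unfolding vC_def using pos \<open>\<epsilon> > 0\<close> by (simp add: field_simps)
  ultimately show ?thesis by (rule that)
qed

lemma infected_left_test_vector:
  fixes c0 a0 a1 a3 a6 ek a7 qv lH b :: real
  assumes pos: "c0 \<ge> 0" "a0 > 0" "a1 > 0" "a3 > 0" "a6 \<ge> 0" "ek \<ge> 0" "a7 > 0" "qv \<ge> 0" "lH \<ge> 0" "b \<ge> 0"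
    and chi_pos: "a3 * a7 - b * ek > 0"
    and below: "c0 * (1 + qv / a1 + lH * a6 * qv * a7 / (a1 * (a3 * a7 - b * ek))) < a0"
  obtains wI wH wC where "wI > 0" "wH > 0" "wC > 0"
    "c0 - a0 + qv * wI < 0" "c0 - a1 * wI + a6 * wH < 0" "c0 * lH - a3 * wH + b * wC < 0"
    "ek * wH - a7 * wC < 0"
proof -
  define chi where "chi = a3 * a7 - b * ek"
  have "chi > 0" using chi_pos chi_def by simp
  define r where "r = c0 * (1 + qv / a1 + lH * a6 * qv * a7 / (a1 * chi)) - a0"
  have "r < 0" using below unfolding r_def chi_def by simp
  define k where "k = qv / a1 * (1 + a6 * (a7 + b) / chi)"
  have "k \<ge> 0" unfolding k_def using pos \<open>chi > 0\<close> by simp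
  define \<epsilon> where "\<epsilon> = - r / (2 * (1 + k))"
  have "\<epsilon> > 0" unfolding \<epsilon>_def using \<open>r < 0\<close> \<open>k \<ge> 0\<close> by (intro divide_pos_pos) auto
  have "\<epsilon> * (1 + k) = - r / 2" unfolding \<epsilon>_def using \<open>k \<ge> 0\<close> by (simp add: field_simps)
  then have "r + \<epsilon> * k < 0" using \<open>r < 0\<close> \<open>\<epsilon> > 0\<close> by (simp add: algebra_simps)
  define wH where "wH = (c0 * lH * a7 + \<epsilon> * a7 + b * \<epsilon>) / chi"
  define wC where "wC = (ek * wH + \<epsilon>) / a7"
  define wI where "wI = (c0 + a6 * wH + \<epsilon>) / a1"
  have "wH > 0" unfolding wH_def using pos \<open>\<epsilon> > 0\<close> \<open>chi > 0\<close>
    by (intro divide_pos_pos add_nonneg_pos add_pos_nonneg) auto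
  have "wI > 0" unfolding wI_def using pos \<open>\<epsilon> > 0\<close> \<open>wH > 0\<close> by (intro divide_pos_pos add_nonneg_pos) auto
  moreover note \<open>wH > 0\<close>
  moreover have "wC > 0" unfolding wC_def using pos \<open>\<epsilon> > 0\<close> \<open>wH > 0\<close> by (intro divide_pos_pos add_nonneg_pos) auto
  moreover have "c0 - a0 + qv * wI < 0"
  proof -
    have "c0 - a0 + qv * wI = r + \<epsilon> * k"
      unfolding r_def k_def wI_def wH_def using pos \<open>chi > 0\<close> by (simp add: field_simps)
    then show ?thesis using \<open>r + \<epsilon> * k < 0\<close> by simp
  qed
  moreover have "c0 - a1 * wI + a6 * wH < 0" unfolding wI_def using pos \<open>\<epsilon> > 0\<close> by (simp add: field_simps)
  moreover have "c0 * lH - a3 * wH + b * wC < 0"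
  proof -
    have "wH * chi = c0 * lH * a7 + \<epsilon> * a7 + b * \<epsilon>" "wC * a7 = ek * wH + \<epsilon>"
      unfolding wH_def wC_def using \<open>chi > 0\<close> pos by simp_all
    then have "a7 * (c0 * lH - a3 * wH + b * wC) = a7 * (- \<epsilon>)" unfolding chi_def by algebra
    then have "c0 * lH - a3 * wH + b * wC = - \<epsilon>" using \<open>a7 > 0\<close> by (metis mult_cancel_left less_irrefl)
    then show ?thesis using \<open>\<epsilon> > 0\<close> by simp
  qed
  moreover have "ek * wH - a7 * wC < 0" unfolding wC_def using pos \<open>\<epsilon> > 0\<close> by (simp add: field_simps)
  ultimately show ?thesis by (rule that)
qed

lemma infected_diagonal_lyapunov:
  fixes c0 a0 a1 a3 a6 ek a7 qv lH b :: real
  assumes pos: "c0 \<ge> 0" "a0 > 0" "a1 > 0" "a3 > 0" "a6 \<ge> 0" "ek \<ge> 0" "a7 > 0" "qv \<ge> 0" "lH \<ge> 0" "b \<ge> 0"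
    and chi_pos: "a3 * a7 - b * ek > 0"
    and below: "c0 * (1 + qv / a1 + lH * a6 * qv * a7 / (a1 * (a3 * a7 - b * ek))) < a0"
  obtains dI dH dC \<sigma> where "dI > 0" "dH > 0" "dC > 0" "\<sigma> > 0"
    "\<And>A I H C. A * (c0 * (A + I + lH * H) - a0 * A) + dI * I * (qv * A - a1 * I)
      + dH * H * (a6 * I + ek * C - a3 * H) + dC * C * (b * H - a7 * C) \<le> - \<sigma> * (A\<^sup>2 + I\<^sup>2 + H\<^sup>2 + C\<^sup>2)"
proof -
  obtain vI vH vC where pos_v: "vI > 0" "vH > 0" "vC > 0"
    and rows: "c0 - a0 + c0 * vI + c0 * lH * vH < 0" "qv - a1 * vI < 0" "a6 * vI - a3 * vH + ek * vC < 0"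
      "b * vH - a7 * vC < 0"
    by (rule infected_right_test_vector[OF pos chi_pos below])
  obtain wI wH wC where pos_w: "wI > 0" "wH > 0" "wC > 0"
    and cols: "c0 - a0 + qv * wI < 0" "c0 - a1 * wI + a6 * wH < 0" "c0 * lH - a3 * wH + b * wC < 0"
      "ek * wH - a7 * wC < 0"
    by (rule infected_left_test_vector[OF pos chi_pos below])
  define M where "M i j = [[c0 - a0, c0, c0 * lH, 0], [qv, - a1, 0, 0], [0, a6, - a3, ek], [0, 0, b, - a7]] ! i ! j"
    for i j :: nat
  define v where "v i = [1, vI, vH, vC] ! i" for i :: nat
  define w where "w i = [1, wI, wH, wC] ! i" for i :: nat
  have less_4: "i < 4 \<longleftrightarrow> i = 0 \<or> i = 1 \<or> i = 2 \<or> i = 3" for i :: nat by auto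
  have off_diag: "M i j \<ge> 0" if "i < 4" "j < 4" "i \<noteq> j" for i j
    using that pos unfolding less_4 M_def by auto
  have v_pos: "v i > 0" and w_pos: "w i > 0" if "i < 4" for i
    using that pos_v pos_w unfolding less_4 v_def w_def by auto
  have right: "(\<Sum>j<4. M i j * v j) < 0" if "i < 4" for i
    using that rows unfolding less_4 by (auto simp: M_def v_def numeral_eq_Suc algebra_simps)
  have left: "(\<Sum>i<4. w i * M i j) < 0" if "j < 4" for j
    using that cols unfolding less_4 by (auto simp: M_def w_def numeral_eq_Suc algebra_simps)
  obtain \<sigma> where "\<sigma> > 0"
    and quad: "\<And>x. (\<Sum>i<4. \<Sum>j<4. w i / v i * M i j * x i * x j) \<le> - \<sigma> * (\<Sum>i<4. (x i)\<^sup>2)"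
    using metzler_diagonal_lyapunov[OF off_diag v_pos w_pos right left] by blast
  show ?thesis
  proof (rule that[of "wI / vI" "wH / vH" "wC / vC" \<sigma>])
    show "wI / vI > 0" "wH / vH > 0" "wC / vC > 0" using pos_v pos_w by simp_all
    show "\<sigma> > 0" by fact
    fix A I H C :: real
    show "A * (c0 * (A + I + lH * H) - a0 * A) + wI / vI * I * (qv * A - a1 * I)
      + wH / vH * H * (a6 * I + ek * C - a3 * H) + wC / vC * C * (b * H - a7 * C)
      \<le> - \<sigma> * (A\<^sup>2 + I\<^sup>2 + H\<^sup>2 + C\<^sup>2)"
      using quad[of "\<lambda>i. [A, I, H, C] ! i"]
      by (simp add: M_def v_def w_def numeral_eq_Suc power2_eq_square algebra_simps)
  qed
qed

lemma two_mult_le_young: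
  fixes a b e :: real
  assumes "e > 0"
  shows "2 * a * b \<le> e * a\<^sup>2 + b\<^sup>2 / e"
proof -
  have "0 \<le> (e * a - b)\<^sup>2 / e" using assms by simp
  also have "\<dots> = e * a\<^sup>2 - 2 * a * b + b\<^sup>2 / e" using assms by (simp add: power2_eq_square field_simps)
  finally show ?thesis by simp
qed

lemma sq_linear3_le:
  fixes k1 k2 k3 x1 x2 x3 K :: real
  assumes "\<bar>k1\<bar> \<le> K" "\<bar>k2\<bar> \<le> K" "\<bar>k3\<bar> \<le> K"
  shows "(k1 * x1 + k2 * x2 + k3 * x3)\<^sup>2 \<le> 3 * K\<^sup>2 * (x1\<^sup>2 + x2\<^sup>2 + x3\<^sup>2)"
proof -
  have "\<bar>k1 * x1 + k2 * x2 + k3 * x3\<bar> \<le> \<bar>k1\<bar> * \<bar>x1\<bar> + \<bar>k2\<bar> * \<bar>x2\<bar> + \<bar>k3\<bar> * \<bar>x3\<bar>"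
    unfolding abs_mult[symmetric] by linarith
  also have "\<dots> \<le> K * \<bar>x1\<bar> + K * \<bar>x2\<bar> + K * \<bar>x3\<bar>"
    using assms by (intro add_mono mult_right_mono) auto
  finally have "\<bar>k1 * x1 + k2 * x2 + k3 * x3\<bar>\<^sup>2 \<le> (K * \<bar>x1\<bar> + K * \<bar>x2\<bar> + K * \<bar>x3\<bar>)\<^sup>2"
    by (rule power_mono) simp
  also have "\<dots> \<le> 3 * ((K * \<bar>x1\<bar>)\<^sup>2 + (K * \<bar>x2\<bar>)\<^sup>2 + (K * \<bar>x3\<bar>)\<^sup>2)"
  proof -
    have "0 \<le> (K * \<bar>x1\<bar> - K * \<bar>x2\<bar>)\<^sup>2 + (K * \<bar>x2\<bar> - K * \<bar>x3\<bar>)\<^sup>2 + (K * \<bar>x1\<bar> - K * \<bar>x3\<bar>)\<^sup>2"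
      by simp
    then show ?thesis by (simp add: power2_eq_square algebra_simps)
  qed
  also have "\<dots> = 3 * K\<^sup>2 * (x1\<^sup>2 + x2\<^sup>2 + x3\<^sup>2)" by (simp add: power_mult_distrib algebra_simps)
  finally show ?thesis by simp
qed

text \<open>The cross term \<open>2 g p u z\<close> is absorbed by the diagonal terms because \<open>g p \<le> \<mu>\<close>.\<close>
lemma noninfected_deviation_bound:
  fixes \<mu> p a2 g u z L1 L2 :: real
  assumes "\<mu> > 0" "p \<ge> 0" "a2 > 0" "g > 0" "g * p \<le> \<mu>"
  shows "2 * u * (- \<mu> * u + L1) + 2 * g * z * (p * (u - z) - a2 * z + L2)
    \<le> - (\<mu> / 2) * u\<^sup>2 - (g * (p + a2) / 2) * z\<^sup>2 + 2 / \<mu> * L1\<^sup>2 + 2 * g / (p + a2) * L2\<^sup>2"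
proof -
  have cross: "2 * u * (g * p * z) \<le> \<mu> * u\<^sup>2 + g * p * z\<^sup>2"
  proof -
    have "2 * u * (g * p * z) \<le> \<mu> * u\<^sup>2 + (g * p * z)\<^sup>2 / \<mu>" using two_mult_le_young \<open>\<mu> > 0\<close> by blast
    also have "(g * p * z)\<^sup>2 / \<mu> = g * p * z\<^sup>2 * (g * p / \<mu>)"
      using \<open>\<mu> > 0\<close> by (simp add: field_simps power2_eq_square)
    also have "\<dots> \<le> g * p * z\<^sup>2 * 1" using assms by (intro mult_left_mono) auto
    finally show ?thesis by simp
  qed
  have L1_term: "2 * u * L1 \<le> \<mu> / 2 * u\<^sup>2 + 2 / \<mu> * L1\<^sup>2"
    using two_mult_le_young[of "\<mu> / 2" u L1] \<open>\<mu> > 0\<close> by simp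
  have L2_term: "2 * (g * z) * L2 \<le> g * (p + a2) / 2 * z\<^sup>2 + 2 * g / (p + a2) * L2\<^sup>2"
  proof -
    have "2 * (g * z) * L2 \<le> (p + a2) / (2 * g) * (g * z)\<^sup>2 + L2\<^sup>2 / ((p + a2) / (2 * g))"
      using assms by (intro two_mult_le_young) simp
    also have "(p + a2) / (2 * g) * (g * z)\<^sup>2 = g * (p + a2) / 2 * z\<^sup>2"
      using \<open>g > 0\<close> by (simp add: power2_eq_square)
    also have "L2\<^sup>2 / ((p + a2) / (2 * g)) = 2 * g / (p + a2) * L2\<^sup>2" by simp
    finally show ?thesis .
  qed
  have "2 * u * (- \<mu> * u + L1) + 2 * g * z * (p * (u - z) - a2 * z + L2)
    = - 2 * \<mu> * u\<^sup>2 + 2 * u * L1 + 2 * u * (g * p * z) - 2 * g * (p + a2) * z\<^sup>2 + 2 * (g * z) * L2"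
    by (simp add: algebra_simps power2_eq_square)
  moreover have "g * p * z\<^sup>2 \<le> g * (p + a2) * z\<^sup>2" using assms by (intro mult_right_mono) auto
  ultimately have "2 * u * (- \<mu> * u + L1) + 2 * g * z * (p * (u - z) - a2 * z + L2)
    \<le> - 2 * \<mu> * u\<^sup>2 + (\<mu> * u\<^sup>2 + g * p * z\<^sup>2) + (\<mu> / 2 * u\<^sup>2 + 2 / \<mu> * L1\<^sup>2)
      - 2 * g * (p + a2) * z\<^sup>2 + (g * (p + a2) / 2 * z\<^sup>2 + 2 * g / (p + a2) * L2\<^sup>2)
      + (g * (p + a2) * z\<^sup>2 - g * p * z\<^sup>2)"
    using cross L1_term L2_term by linarith
  also have "\<dots> = - (\<mu> / 2) * u\<^sup>2 - (g * (p + a2) / 2) * z\<^sup>2 + 2 / \<mu> * L1\<^sup>2 + 2 * g / (p + a2) * L2\<^sup>2"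
    by (simp add: field_simps)
  finally show ?thesis .
qed

lemma abs_mult_load_le:
  fixes A I H C lH :: real
  assumes "lH \<ge> 0"
  shows "\<bar>A * (A + I + lH * H)\<bar> \<le> (2 + lH) * (A\<^sup>2 + I\<^sup>2 + H\<^sup>2 + C\<^sup>2)"
proof -
  have sq: "\<bar>x * y\<bar> \<le> x\<^sup>2 + y\<^sup>2" for x y :: real
  proof -
    have "2 * \<bar>x\<bar> * \<bar>y\<bar> \<le> x\<^sup>2 + y\<^sup>2" using two_mult_le_young[of 1 "\<bar>x\<bar>" "\<bar>y\<bar>"] by simp
    moreover have "0 \<le> \<bar>x\<bar> * \<bar>y\<bar>" by simp
    ultimately show ?thesis unfolding abs_mult by linarith
  qed
  have "A * (A + I + lH * H) = A\<^sup>2 + A * I + lH * (A * H)" by (simp add: algebra_simps power2_eq_square)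
  moreover have "\<bar>a + b + c\<bar> \<le> \<bar>a\<bar> + \<bar>b\<bar> + \<bar>c\<bar>" for a b c :: real by arith
  moreover have "\<bar>A\<^sup>2\<bar> = A\<^sup>2" "\<bar>lH * (A * H)\<bar> = lH * \<bar>A * H\<bar>" using assms by (simp_all add: abs_mult)
  ultimately have "\<bar>A * (A + I + lH * H)\<bar> \<le> A\<^sup>2 + \<bar>A * I\<bar> + lH * \<bar>A * H\<bar>" by metis
  also have "\<dots> \<le> A\<^sup>2 + (A\<^sup>2 + I\<^sup>2) + lH * (A\<^sup>2 + H\<^sup>2)"
    using assms sq by (intro add_mono mult_left_mono) auto
  also have "\<dots> \<le> (2 + lH) * (A\<^sup>2 + I\<^sup>2 + H\<^sup>2 + C\<^sup>2)"
  proof -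
    have "(2 + lH) * (A\<^sup>2 + I\<^sup>2 + H\<^sup>2 + C\<^sup>2)
        = A\<^sup>2 + (A\<^sup>2 + I\<^sup>2) + lH * (A\<^sup>2 + H\<^sup>2) + (I\<^sup>2 + 2 * H\<^sup>2 + 2 * C\<^sup>2 + lH * (I\<^sup>2 + C\<^sup>2))"
      by (simp add: algebra_simps)
    moreover have "0 \<le> I\<^sup>2 + 2 * H\<^sup>2 + 2 * C\<^sup>2 + lH * (I\<^sup>2 + C\<^sup>2)" using assms by simp
    ultimately show ?thesis by linarith
  qed
  finally show ?thesis .
qed

lemma infected_form_perturbation:
  fixes dI dH dC \<sigma> c c0 a0 a1 a3 a6 ek a7 qv lH b A I H C :: real
  assumes "lH \<ge> 0" and close: "\<bar>c - c0\<bar> * (2 + lH) \<le> \<sigma> / 2"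
    and quad: "A * (c0 * (A + I + lH * H) - a0 * A) + dI * I * (qv * A - a1 * I)
      + dH * H * (a6 * I + ek * C - a3 * H) + dC * C * (b * H - a7 * C) \<le> - \<sigma> * (A\<^sup>2 + I\<^sup>2 + H\<^sup>2 + C\<^sup>2)"
  shows "A * (c * (A + I + lH * H) - a0 * A) + dI * I * (qv * A - a1 * I)
      + dH * H * (a6 * I + ek * C - a3 * H) + dC * C * (b * H - a7 * C) \<le> - (\<sigma> / 2 * (A\<^sup>2 + I\<^sup>2 + H\<^sup>2 + C\<^sup>2))"
proof -
  define Y where "Y = A\<^sup>2 + I\<^sup>2 + H\<^sup>2 + C\<^sup>2"
  define h where "h = A + I + lH * H"
  have "(c - c0) * (A * h) \<le> \<bar>c - c0\<bar> * \<bar>A * h\<bar>"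
    using abs_ge_self[of "(c - c0) * (A * h)"] by (simp add: abs_mult)
  also have "\<dots> \<le> \<bar>c - c0\<bar> * ((2 + lH) * Y)"
    unfolding Y_def h_def by (intro mult_left_mono abs_mult_load_le \<open>lH \<ge> 0\<close>) simp
  also have "\<dots> \<le> \<sigma> / 2 * Y"
    using mult_right_mono[OF close, of Y] unfolding Y_def by (simp add: mult.assoc)
  finally have "(c - c0) * (A * h) \<le> \<sigma> / 2 * Y" .
  moreover have "A * (c * h - a0 * A) = A * (c0 * h - a0 * A) + (c - c0) * (A * h)"
    by (simp add: algebra_simps)
  ultimately show ?thesis using quad unfolding Y_def h_def by linarith
qed

lemma infection_source_sq_bound:
  fixes c m lH e1 e2 A I H :: real
  assumes "\<bar>c\<bar> \<le> m" "lH \<ge> 0" "e1 \<ge> 0" "e2 \<ge> 0"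
  shows "(- c * (A + I + lH * H) + e1 * I + e2 * H)\<^sup>2 \<le> 3 * (m * (1 + lH) + e1 + e2)\<^sup>2 * (A\<^sup>2 + I\<^sup>2 + H\<^sup>2)"
    and "(e1 * I + e2 * H)\<^sup>2 \<le> 3 * (m * (1 + lH) + e1 + e2)\<^sup>2 * (A\<^sup>2 + I\<^sup>2 + H\<^sup>2)"
proof -
  define K where "K = m * (1 + lH) + e1 + e2"
  have "m \<ge> 0" "m * lH \<ge> 0" using assms by simp_all
  moreover have "\<bar>c * lH\<bar> \<le> m * lH" using assms by (simp add: abs_mult mult_right_mono)
  moreover have "K = m + e1 + e2 + m * lH" unfolding K_def by (simp add: algebra_simps)
  ultimately have coeffs: "\<bar>- c\<bar> \<le> K" "\<bar>e1 - c\<bar> \<le> K" "\<bar>e2 - c * lH\<bar> \<le> K" "\<bar>0\<bar> \<le> K" "\<bar>e1\<bar> \<le> K" "\<bar>e2\<bar> \<le> K"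
    using assms by arith+
  show "(- c * (A + I + lH * H) + e1 * I + e2 * H)\<^sup>2 \<le> 3 * (m * (1 + lH) + e1 + e2)\<^sup>2 * (A\<^sup>2 + I\<^sup>2 + H\<^sup>2)"
    using sq_linear3_le[OF coeffs(1-3), of A I H] unfolding K_def by (simp add: algebra_simps)
  show "(e1 * I + e2 * H)\<^sup>2 \<le> 3 * (m * (1 + lH) + e1 + e2)\<^sup>2 * (A\<^sup>2 + I\<^sup>2 + H\<^sup>2)"
    using sq_linear3_le[OF coeffs(4-6), of A I H] unfolding K_def by simp
qed

lemma infected_lyapunov_derivative_bound:
  fixes dI dH dC \<sigma> c0 a0 a1 a3 a6 ek a7 qv lH b \<mu> p a2 e1 e2 g :: real
  assumes weights: "dI > 0" "dH > 0" "dC > 0" "\<sigma> > 0"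
    and par: "lH \<ge> 0" "\<mu> > 0" "p \<ge> 0" "a2 > 0" "e1 \<ge> 0" "e2 \<ge> 0" "c0 \<ge> 0" "g > 0" "g * p \<le> \<mu>"
    and quad: "\<And>A I H C. A * (c0 * (A + I + lH * H) - a0 * A) + dI * I * (qv * A - a1 * I)
      + dH * H * (a6 * I + ek * C - a3 * H) + dC * C * (b * H - a7 * C) \<le> - \<sigma> * (A\<^sup>2 + I\<^sup>2 + H\<^sup>2 + C\<^sup>2)"
  obtains \<theta> \<gamma> \<alpha> where "\<theta> > 0" "\<gamma> > 0" "\<alpha> > 0"
    "\<And>A I H C u z c. \<bar>c - c0\<bar> \<le> \<theta> \<Longrightarrow>
      2 * (A * (c * (A + I + lH * H) - a0 * A) + dI * I * (qv * A - a1 * I)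
        + dH * H * (a6 * I + ek * C - a3 * H) + dC * C * (b * H - a7 * C))
      + \<gamma> * (2 * u * (- \<mu> * u - c * (A + I + lH * H) + e1 * I + e2 * H)
        + 2 * g * z * (p * (u - z) - a2 * z + e1 * I + e2 * H))
      \<le> - \<alpha> * (A\<^sup>2 + dI * I\<^sup>2 + dH * H\<^sup>2 + dC * C\<^sup>2 + \<gamma> * (u\<^sup>2 + g * z\<^sup>2))"
proof -
  define \<theta> where "\<theta> = \<sigma> / (2 * (2 + lH))"
  define K where "K = (c0 + \<theta>) * (1 + lH) + e1 + e2"
  define KW where "KW = (2 / \<mu> + 2 * g / (p + a2)) * (3 * K\<^sup>2)"
  define \<gamma> where "\<gamma> = \<sigma> / (2 * (KW + 1))"
  define \<alpha> where "\<alpha> = min (\<sigma> / (2 * (1 + dI + dH + dC))) (min (\<mu> / 2) ((p + a2) / 2))"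
  have "\<theta> > 0" "KW \<ge> 0" unfolding \<theta>_def KW_def using weights par by simp_all
  then have "\<gamma> > 0" "\<gamma> * KW \<le> \<sigma> / 2" unfolding \<gamma>_def using weights by (simp_all add: field_simps)
  have "\<alpha> > 0" unfolding \<alpha>_def using weights par by simp
  have \<alpha>_le: "\<alpha> \<le> \<sigma> / (2 * (1 + dI + dH + dC))" "\<alpha> \<le> \<mu> / 2" "\<alpha> \<le> (p + a2) / 2"
    unfolding \<alpha>_def by (simp_all only: min.cobounded1 min.coboundedI2)
  have "2 * (A * (c * (A + I + lH * H) - a0 * A) + dI * I * (qv * A - a1 * I)
        + dH * H * (a6 * I + ek * C - a3 * H) + dC * C * (b * H - a7 * C))
      + \<gamma> * (2 * u * (- \<mu> * u - c * (A + I + lH * H) + e1 * I + e2 * H)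
        + 2 * g * z * (p * (u - z) - a2 * z + e1 * I + e2 * H))
      \<le> - \<alpha> * (A\<^sup>2 + dI * I\<^sup>2 + dH * H\<^sup>2 + dC * C\<^sup>2 + \<gamma> * (u\<^sup>2 + g * z\<^sup>2))"
      if c: "\<bar>c - c0\<bar> \<le> \<theta>" for A I H C u z c
  proof -
    define Y where "Y = A\<^sup>2 + I\<^sup>2 + H\<^sup>2 + C\<^sup>2"
    define h where "h = A + I + lH * H"
    define L1 where "L1 = - c * h + e1 * I + e2 * H"
    define L2 where "L2 = e1 * I + e2 * H"
    have "Y \<ge> 0" unfolding Y_def by simp
    have "\<theta> * (2 + lH) = \<sigma> / 2" unfolding \<theta>_def using par by (simp add: field_simps)
    moreover have "\<bar>c - c0\<bar> * (2 + lH) \<le> \<theta> * (2 + lH)" using c par by (intro mult_right_mono) auto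
    ultimately have "\<bar>c - c0\<bar> * (2 + lH) \<le> \<sigma> / 2" by linarith
    from infected_form_perturbation[OF par(1) this quad]
    have infected: "A * (c * h - a0 * A) + dI * I * (qv * A - a1 * I)
        + dH * H * (a6 * I + ek * C - a3 * H) + dC * C * (b * H - a7 * C) \<le> - (\<sigma> / 2 * Y)"
      unfolding Y_def h_def .
    have "\<bar>c\<bar> \<le> c0 + \<theta>" using c par by linarith
    note source = infection_source_sq_bound[OF this par(1,5,6), where A = A and I = I and H = H, folded K_def]
    have "3 * K\<^sup>2 * (A\<^sup>2 + I\<^sup>2 + H\<^sup>2) \<le> 3 * K\<^sup>2 * Y" unfolding Y_def by (intro mult_left_mono) auto
    then have "L1\<^sup>2 \<le> 3 * K\<^sup>2 * Y" "L2\<^sup>2 \<le> 3 * K\<^sup>2 * Y"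
      using source unfolding L1_def L2_def h_def by (simp_all add: algebra_simps)
    then have "2 / \<mu> * L1\<^sup>2 \<le> 2 / \<mu> * (3 * K\<^sup>2 * Y)" "2 * g / (p + a2) * L2\<^sup>2 \<le> 2 * g / (p + a2) * (3 * K\<^sup>2 * Y)"
      using par by (intro mult_left_mono; simp)+
    then have "2 / \<mu> * L1\<^sup>2 + 2 * g / (p + a2) * L2\<^sup>2 \<le> KW * Y" unfolding KW_def by (simp add: algebra_simps)
    then have "2 * u * (- \<mu> * u + L1) + 2 * g * z * (p * (u - z) - a2 * z + L2)
        \<le> - (\<mu> / 2) * u\<^sup>2 - (g * (p + a2) / 2) * z\<^sup>2 + KW * Y"
      using noninfected_deviation_bound[OF par(2,3,4,8,9), of u L1 z L2] by linarith
    then have "\<gamma> * (2 * u * (- \<mu> * u + L1) + 2 * g * z * (p * (u - z) - a2 * z + L2))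
        \<le> \<gamma> * (- (\<mu> / 2) * u\<^sup>2 - (g * (p + a2) / 2) * z\<^sup>2 + KW * Y)"
      using \<open>\<gamma> > 0\<close> by (intro mult_left_mono) auto
    also have "\<dots> = - (\<mu> / 2 * (\<gamma> * u\<^sup>2)) - (p + a2) / 2 * (\<gamma> * (g * z\<^sup>2)) + \<gamma> * (KW * Y)"
      by (simp add: algebra_simps)
    finally have noninfected: "\<gamma> * (2 * u * (- \<mu> * u + L1) + 2 * g * z * (p * (u - z) - a2 * z + L2))
        \<le> - (\<mu> / 2 * (\<gamma> * u\<^sup>2)) - (p + a2) / 2 * (\<gamma> * (g * z\<^sup>2)) + \<gamma> * (KW * Y)" .
    have "A\<^sup>2 + dI * I\<^sup>2 + dH * H\<^sup>2 + dC * C\<^sup>2 \<le> (1 + dI + dH + dC) * Y"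
    proof -
      have "dI * I\<^sup>2 \<le> dI * Y" "dH * H\<^sup>2 \<le> dH * Y" "dC * C\<^sup>2 \<le> dC * Y"
        unfolding Y_def using weights by (intro mult_left_mono; simp)+
      moreover have "A\<^sup>2 \<le> Y" unfolding Y_def by simp
      ultimately show ?thesis by (simp add: algebra_simps)
    qed
    then have "\<alpha> * (A\<^sup>2 + dI * I\<^sup>2 + dH * H\<^sup>2 + dC * C\<^sup>2) \<le> \<sigma> / (2 * (1 + dI + dH + dC)) * ((1 + dI + dH + dC) * Y)"
      using \<open>\<alpha> > 0\<close> \<open>Y \<ge> 0\<close> \<alpha>_le weights by (intro mult_mono) auto
    also have "\<dots> = \<sigma> / 2 * Y" using weights by (simp add: field_simps)
    finally have A_part: "\<alpha> * (A\<^sup>2 + dI * I\<^sup>2 + dH * H\<^sup>2 + dC * C\<^sup>2) \<le> \<sigma> / 2 * Y" .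
    have u_part: "\<alpha> * (\<gamma> * u\<^sup>2) \<le> \<mu> / 2 * (\<gamma> * u\<^sup>2)"
      and z_part: "\<alpha> * (\<gamma> * (g * z\<^sup>2)) \<le> (p + a2) / 2 * (\<gamma> * (g * z\<^sup>2))"
      using \<open>\<gamma> > 0\<close> par \<alpha>_le by (intro mult_right_mono; simp)+
    have W_part: "\<gamma> * (KW * Y) \<le> \<sigma> / 2 * Y" using mult_right_mono[OF \<open>\<gamma> * KW \<le> \<sigma> / 2\<close> \<open>Y \<ge> 0\<close>] by simp
    have "2 * (A * (c * (A + I + lH * H) - a0 * A) + dI * I * (qv * A - a1 * I)
        + dH * H * (a6 * I + ek * C - a3 * H) + dC * C * (b * H - a7 * C))
      + \<gamma> * (2 * u * (- \<mu> * u - c * (A + I + lH * H) + e1 * I + e2 * H)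
        + 2 * g * z * (p * (u - z) - a2 * z + e1 * I + e2 * H))
      = 2 * (A * (c * h - a0 * A) + dI * I * (qv * A - a1 * I)
        + dH * H * (a6 * I + ek * C - a3 * H) + dC * C * (b * H - a7 * C))
      + \<gamma> * (2 * u * (- \<mu> * u + L1) + 2 * g * z * (p * (u - z) - a2 * z + L2))"
      unfolding h_def L1_def L2_def by (simp add: algebra_simps)
    also have "\<dots> \<le> 2 * (- (\<sigma> / 2 * Y))
        + (- (\<mu> / 2 * (\<gamma> * u\<^sup>2)) - (p + a2) / 2 * (\<gamma> * (g * z\<^sup>2)) + \<gamma> * (KW * Y))"
      using infected noninfected by (intro add_mono) auto
    also have "\<dots> \<le> - (\<alpha> * (A\<^sup>2 + dI * I\<^sup>2 + dH * H\<^sup>2 + dC * C\<^sup>2)) - \<alpha> * (\<gamma> * u\<^sup>2) - \<alpha> * (\<gamma> * (g * z\<^sup>2))"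
      using A_part u_part z_part W_part by linarith
    also have "\<dots> = - \<alpha> * (A\<^sup>2 + dI * I\<^sup>2 + dH * H\<^sup>2 + dC * C\<^sup>2 + \<gamma> * (u\<^sup>2 + g * z\<^sup>2))"
      by (simp add: algebra_simps)
    finally show ?thesis .
  qed
  with \<open>\<theta> > 0\<close> \<open>\<gamma> > 0\<close> \<open>\<alpha> > 0\<close> show ?thesis by (rule that)
qed

lemma lyapunov_form_equivalence:
  fixes dI dH dC \<gamma> g :: real
  assumes "dI > 0" "dH > 0" "dC > 0" "\<gamma> > 0" "g > 0"
  obtains k K where "k > 0" "K > 0"
    "\<And>s A I z H C. k * (s\<^sup>2 + A\<^sup>2 + I\<^sup>2 + z\<^sup>2 + H\<^sup>2 + C\<^sup>2)
      \<le> A\<^sup>2 + dI * I\<^sup>2 + dH * H\<^sup>2 + dC * C\<^sup>2 + \<gamma> * ((s + z)\<^sup>2 + g * z\<^sup>2)"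
    "\<And>s A I z H C. A\<^sup>2 + dI * I\<^sup>2 + dH * H\<^sup>2 + dC * C\<^sup>2 + \<gamma> * ((s + z)\<^sup>2 + g * z\<^sup>2)
      \<le> K * (s\<^sup>2 + A\<^sup>2 + I\<^sup>2 + z\<^sup>2 + H\<^sup>2 + C\<^sup>2)"
proof -
  define m where "m = min (min 1 dI) (min dH dC)"
  define k where "k = min m (\<gamma> * min 1 g / 3)"
  define M where "M = 1 + dI + dH + dC"
  define K where "K = M + \<gamma> * (2 + g)"
  have "m > 0" "m \<le> 1" "m \<le> dI" "m \<le> dH" "m \<le> dC" unfolding m_def using assms by auto
  have "k > 0" "k \<le> m" "k \<le> \<gamma> * min 1 g / 3" unfolding k_def using \<open>m > 0\<close> assms by auto
  have "K > 0" unfolding K_def M_def using assms by (simp add: add_pos_pos)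
  have lower: "k * (s\<^sup>2 + A\<^sup>2 + I\<^sup>2 + z\<^sup>2 + H\<^sup>2 + C\<^sup>2)
      \<le> A\<^sup>2 + dI * I\<^sup>2 + dH * H\<^sup>2 + dC * C\<^sup>2 + \<gamma> * ((s + z)\<^sup>2 + g * z\<^sup>2)" for s A I z H C
  proof -
    have "m * A\<^sup>2 \<le> 1 * A\<^sup>2" "m * I\<^sup>2 \<le> dI * I\<^sup>2" "m * H\<^sup>2 \<le> dH * H\<^sup>2" "m * C\<^sup>2 \<le> dC * C\<^sup>2"
      using \<open>m \<le> 1\<close> \<open>m \<le> dI\<close> \<open>m \<le> dH\<close> \<open>m \<le> dC\<close> by (intro mult_right_mono; simp)+
    moreover have "k * (A\<^sup>2 + I\<^sup>2 + H\<^sup>2 + C\<^sup>2) \<le> m * (A\<^sup>2 + I\<^sup>2 + H\<^sup>2 + C\<^sup>2)"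
      using \<open>k \<le> m\<close> by (intro mult_right_mono) auto
    moreover have "k * (s\<^sup>2 + z\<^sup>2) \<le> \<gamma> * ((s + z)\<^sup>2 + g * z\<^sup>2)"
    proof -
      have "3 * ((s + z)\<^sup>2 + z\<^sup>2) - (s\<^sup>2 + z\<^sup>2) = ((2 * s + 3 * z)\<^sup>2 + z\<^sup>2) / 2"
        by (simp add: power2_eq_square field_simps)
      moreover have "((2 * s + 3 * z)\<^sup>2 + z\<^sup>2) / 2 \<ge> 0" by simp
      ultimately have "s\<^sup>2 + z\<^sup>2 \<le> 3 * ((s + z)\<^sup>2 + z\<^sup>2)" by linarith
      then have "k * (s\<^sup>2 + z\<^sup>2) \<le> \<gamma> * min 1 g / 3 * (3 * ((s + z)\<^sup>2 + z\<^sup>2))"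
        using \<open>k > 0\<close> \<open>k \<le> \<gamma> * min 1 g / 3\<close> by (intro mult_mono) auto
      also have "\<dots> = \<gamma> * (min 1 g * (s + z)\<^sup>2 + min 1 g * z\<^sup>2)" by (simp add: algebra_simps)
      also have "\<dots> \<le> \<gamma> * (1 * (s + z)\<^sup>2 + g * z\<^sup>2)"
        using assms by (intro mult_left_mono add_mono mult_right_mono) auto
      finally show ?thesis by simp
    qed
    ultimately show ?thesis by (simp add: algebra_simps)
  qed
  have upper: "A\<^sup>2 + dI * I\<^sup>2 + dH * H\<^sup>2 + dC * C\<^sup>2 + \<gamma> * ((s + z)\<^sup>2 + g * z\<^sup>2)
      \<le> K * (s\<^sup>2 + A\<^sup>2 + I\<^sup>2 + z\<^sup>2 + H\<^sup>2 + C\<^sup>2)" for s A I z H C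
  proof -
    define Y where "Y = A\<^sup>2 + I\<^sup>2 + H\<^sup>2 + C\<^sup>2"
    have "dI * I\<^sup>2 \<le> dI * Y" "dH * H\<^sup>2 \<le> dH * Y" "dC * C\<^sup>2 \<le> dC * Y"
      unfolding Y_def using assms by (intro mult_left_mono; simp)+
    moreover have "A\<^sup>2 \<le> Y" unfolding Y_def by simp
    ultimately have "A\<^sup>2 + dI * I\<^sup>2 + dH * H\<^sup>2 + dC * C\<^sup>2 \<le> M * Y" unfolding M_def by (simp add: algebra_simps)
    moreover have "(s + z)\<^sup>2 + g * z\<^sup>2 \<le> (2 + g) * (s\<^sup>2 + z\<^sup>2)"
    proof -
      have "(2 + g) * (s\<^sup>2 + z\<^sup>2) - ((s + z)\<^sup>2 + g * z\<^sup>2) = (s - z)\<^sup>2 + g * s\<^sup>2"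
        by (simp add: power2_eq_square algebra_simps)
      moreover have "(s - z)\<^sup>2 + g * s\<^sup>2 \<ge> 0" using assms by simp
      ultimately show ?thesis by linarith
    qed
    then have "\<gamma> * ((s + z)\<^sup>2 + g * z\<^sup>2) \<le> \<gamma> * (2 + g) * (s\<^sup>2 + z\<^sup>2)"
      using assms by (simp add: mult.assoc mult_left_mono)
    moreover have "0 \<le> \<gamma> * (2 + g) * Y" "0 \<le> M * (s\<^sup>2 + z\<^sup>2)" unfolding Y_def M_def using assms by simp_all
    moreover have "K * (s\<^sup>2 + A\<^sup>2 + I\<^sup>2 + z\<^sup>2 + H\<^sup>2 + C\<^sup>2)
        = M * Y + \<gamma> * (2 + g) * (s\<^sup>2 + z\<^sup>2) + \<gamma> * (2 + g) * Y + M * (s\<^sup>2 + z\<^sup>2)"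
      unfolding K_def Y_def by (simp add: algebra_simps)
    ultimately show ?thesis by linarith
  qed
  from \<open>k > 0\<close> \<open>K > 0\<close> lower upper show ?thesis by (rule that)
qed

text \<open>The weights solve the last three columns of \<open>u\<^sup>T M = r u\<^sup>T\<close> exactly; the first column exceeds \<open>r\<close>
  for small \<open>r\<close> because at \<open>r = 0\<close> it equals \<open>c0 (1 + qv / a1 + \<dots>) - a0 > 0\<close>.\<close>
lemma infected_growth_functional:
  fixes c0 lH a0 a1 a3 a6 ek a7 qv b :: real
  assumes pos: "c0 > 0" "lH > 0" "a0 > 0" "a1 > 0" "a3 > 0" "a6 \<ge> 0" "ek \<ge> 0" "a7 > 0" "qv \<ge> 0" "b \<ge> 0"
    and chi_pos: "a3 * a7 - b * ek > 0"
    and above: "c0 * (1 + qv / a1 + lH * a6 * qv * a7 / (a1 * (a3 * a7 - b * ek))) > a0"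
  obtains r uI uH uC where "r > 0" "uI > 0" "uH > 0" "uC \<ge> 0" "c0 - a0 + qv * uI > r"
    "\<And>A I H C c. (c * (A + I + lH * H) - a0 * A) + uI * (qv * A - a1 * I) + uH * (a6 * I + ek * C - a3 * H)
        + uC * (b * H - a7 * C)
      = (c0 - a0 + qv * uI) * A + r * (uI * I + uH * H + uC * C) + (c - c0) * (A + I + lH * H)"
proof -
  define den where "den r = (a3 + r) * (a7 + r) - b * ek" for r
  define uH where "uH r = c0 * lH * (a7 + r) / den r" for r
  define uC where "uC r = ek * uH r / (a7 + r)" for r
  define uI where "uI r = (c0 + a6 * uH r) / (a1 + r)" for r
  define gap where "gap r = c0 - a0 + qv * uI r - r" for r
  have den_pos: "den r > 0" if "r \<ge> 0" for r
  proof -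
    have "den r = (a3 * a7 - b * ek) + r * (a3 + a7) + r * r" unfolding den_def by (simp add: algebra_simps)
    moreover have "r * (a3 + a7) \<ge> 0" "r * r \<ge> 0" using that pos by simp_all
    ultimately show ?thesis using chi_pos by linarith
  qed
  have "gap 0 = c0 * (1 + qv / a1 + lH * a6 * qv * a7 / (a1 * (a3 * a7 - b * ek))) - a0"
    unfolding gap_def uI_def uH_def den_def using pos chi_pos by (simp add: field_simps)
  then have "gap 0 > 0" using above by simp
  moreover have "continuous (at 0) gap"
    unfolding gap_def uI_def uC_def uH_def den_def using pos chi_pos by (intro continuous_intros) auto
  ultimately have "\<forall>\<^sub>F r in at_right 0. gap r > 0"
    by (intro order_tendstoD(1)) (auto simp: continuous_at filterlim_at_split)
  then obtain r0 where "r0 > 0" and r0: "\<And>r. 0 < r \<Longrightarrow> r < r0 \<Longrightarrow> gap r > 0"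
    unfolding eventually_at_right_field by auto
  define r where "r = r0 / 2"
  have "r > 0" "gap r > 0" unfolding r_def using \<open>r0 > 0\<close> r0 by auto
  have "den r > 0" using den_pos \<open>r > 0\<close> by simp
  have "uH r > 0" unfolding uH_def using pos \<open>r > 0\<close> \<open>den r > 0\<close> by simp
  have "uC r \<ge> 0" unfolding uC_def using pos \<open>r > 0\<close> \<open>uH r > 0\<close> by simp
  have "uI r > 0" unfolding uI_def using pos \<open>r > 0\<close> \<open>uH r > 0\<close> by (simp add: add_pos_nonneg)
  have col_I: "uI r * (a1 + r) = c0 + a6 * uH r" unfolding uI_def using pos \<open>r > 0\<close> by simp
  have col_C: "uC r * (a7 + r) = ek * uH r" unfolding uC_def using pos \<open>r > 0\<close> by simp
  have col_H: "c0 * lH - uH r * (a3 + r) + b * uC r = 0"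
  proof -
    have "uH r * den r = c0 * lH * (a7 + r)" unfolding uH_def using \<open>den r > 0\<close> by simp
    then have "(a7 + r) * (c0 * lH - uH r * (a3 + r) + b * uC r) = 0"
      using col_C unfolding den_def by algebra
    then show ?thesis using pos \<open>r > 0\<close> by simp
  qed
  have "(c * (A + I + lH * H) - a0 * A) + uI r * (qv * A - a1 * I) + uH r * (a6 * I + ek * C - a3 * H)
        + uC r * (b * H - a7 * C)
      = (c0 - a0 + qv * uI r) * A + r * (uI r * I + uH r * H + uC r * C) + (c - c0) * (A + I + lH * H)
        + I * (c0 + a6 * uH r - uI r * (a1 + r)) + H * (c0 * lH - uH r * (a3 + r) + b * uC r)
        + C * (ek * uH r - uC r * (a7 + r))" for A I H C c
    by (simp add: algebra_simps)
  then have "(c * (A + I + lH * H) - a0 * A) + uI r * (qv * A - a1 * I) + uH r * (a6 * I + ek * C - a3 * H)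
        + uC r * (b * H - a7 * C)
      = (c0 - a0 + qv * uI r) * A + r * (uI r * I + uH r * H + uC r * C) + (c - c0) * (A + I + lH * H)"
    for A I H C c
    using col_I col_H col_C by simp
  moreover have "c0 - a0 + qv * uI r > r" using \<open>gap r > 0\<close> unfolding gap_def by simp
  ultimately show ?thesis using that \<open>r > 0\<close> \<open>uI r > 0\<close> \<open>uH r > 0\<close> \<open>uC r \<ge> 0\<close> by blast
qed

section \<open>The model near the disease-free equilibrium\<close>

definition pS :: "state \<Rightarrow> real" where "pS X = fst X"
definition pA :: "state \<Rightarrow> real" where "pA X = fst (snd X)"
definition pI :: "state \<Rightarrow> real" where "pI X = fst (snd (snd X))"
definition pQ :: "state \<Rightarrow> real" where "pQ X = fst (snd (snd (snd X)))"
definition pH :: "state \<Rightarrow> real" where "pH X = fst (snd (snd (snd (snd X))))"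
definition pC :: "state \<Rightarrow> real" where "pC X = snd (snd (snd (snd (snd X))))"

lemma proj_simps [simp]:
  "pS (S, A, I, Q, H, C) = S" "pA (S, A, I, Q, H, C) = A" "pI (S, A, I, Q, H, C) = I"
  "pQ (S, A, I, Q, H, C) = Q" "pH (S, A, I, Q, H, C) = H" "pC (S, A, I, Q, H, C) = C"
  by (simp_all add: pS_def pA_def pI_def pQ_def pH_def pC_def)

lemma state_eq_projs: "X = (pS X, pA X, pI X, pQ X, pH X, pC X)"
  by (simp add: pS_def pA_def pI_def pQ_def pH_def pC_def)

lemma proj_diff [simp]:
  "pS (X - Y) = pS X - pS Y" "pA (X - Y) = pA X - pA Y" "pI (X - Y) = pI X - pI Y"
  "pQ (X - Y) = pQ X - pQ Y" "pH (X - Y) = pH X - pH Y" "pC (X - Y) = pC X - pC Y"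
  by (simp_all add: pS_def pA_def pI_def pQ_def pH_def pC_def)

lemma norm_state_sq: "(norm X)\<^sup>2 = (pS X)\<^sup>2 + (pA X)\<^sup>2 + (pI X)\<^sup>2 + (pQ X)\<^sup>2 + (pH X)\<^sup>2 + (pC X)\<^sup>2"
  by (subst state_eq_projs) (simp add: norm_Pair)

lemma abs_proj_le_norm:
  "\<bar>pS X\<bar> \<le> norm X" "\<bar>pA X\<bar> \<le> norm X" "\<bar>pI X\<bar> \<le> norm X"
  "\<bar>pQ X\<bar> \<le> norm X" "\<bar>pH X\<bar> \<le> norm X" "\<bar>pC X\<bar> \<le> norm X"
proof -
  have le: "\<bar>a\<bar> \<le> norm X" if "a\<^sup>2 \<le> (norm X)\<^sup>2" for a
    using that by (metis abs_le_square_iff abs_norm_cancel)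
  show "\<bar>pS X\<bar> \<le> norm X" "\<bar>pA X\<bar> \<le> norm X" "\<bar>pI X\<bar> \<le> norm X"
    "\<bar>pQ X\<bar> \<le> norm X" "\<bar>pH X\<bar> \<le> norm X" "\<bar>pC X\<bar> \<le> norm X"
    by (rule le, simp add: norm_state_sq)+
qed

lemma continuous_on_proj [continuous_intros]:
  "continuous_on S pS" "continuous_on S pA" "continuous_on S pI"
  "continuous_on S pQ" "continuous_on S pH" "continuous_on S pC"
  unfolding pS_def pA_def pI_def pQ_def pH_def pC_def by (intro continuous_intros)+

lemma has_real_derivative_proj:
  assumes "(x has_vector_derivative Y) F"
  shows "((\<lambda>t. pS (x t)) has_real_derivative pS Y) F" "((\<lambda>t. pA (x t)) has_real_derivative pA Y) F"
    "((\<lambda>t. pI (x t)) has_real_derivative pI Y) F" "((\<lambda>t. pQ (x t)) has_real_derivative pQ Y) F"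
    "((\<lambda>t. pH (x t)) has_real_derivative pH Y) F" "((\<lambda>t. pC (x t)) has_real_derivative pC Y) F"
proof -
  have fst: "((\<lambda>t. fst (f t)) has_vector_derivative fst v) F" and snd: "((\<lambda>t. snd (f t)) has_vector_derivative snd v) F"
    if "(f has_vector_derivative v) F" for f :: "real \<Rightarrow> 'a::real_normed_vector \<times> 'b::real_normed_vector" and v
    using that unfolding has_vector_derivative_def by (auto dest: has_derivative_fst has_derivative_snd)
  show "((\<lambda>t. pS (x t)) has_real_derivative pS Y) F" "((\<lambda>t. pA (x t)) has_real_derivative pA Y) F"
    "((\<lambda>t. pI (x t)) has_real_derivative pI Y) F" "((\<lambda>t. pQ (x t)) has_real_derivative pQ Y) F"
    "((\<lambda>t. pH (x t)) has_real_derivative pH Y) F" "((\<lambda>t. pC (x t)) has_real_derivative pC Y) F"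
    unfolding pS_def pA_def pI_def pQ_def pH_def pC_def has_real_derivative_iff_has_vector_derivative
    by (intro fst snd assms)+
qed

lemma lipschitzian_on_proj:
  "lipschitzian_on U pS" "lipschitzian_on U pA" "lipschitzian_on U pI"
  "lipschitzian_on U pQ" "lipschitzian_on U pH" "lipschitzian_on U pC"
proof -
  have "1-lipschitz_on U p" if "\<And>X Y. \<bar>p X - p Y\<bar> \<le> norm (X - Y)" for p :: "state \<Rightarrow> real"
    using that by (intro lipschitz_onI) (auto simp: dist_real_def dist_norm)
  then show "lipschitzian_on U pS" "lipschitzian_on U pA" "lipschitzian_on U pI"
    "lipschitzian_on U pQ" "lipschitzian_on U pH" "lipschitzian_on U pC"
    unfolding lipschitzian_on_def by (metis proj_diff abs_proj_le_norm)+
qed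

locale covid =
  fixes P :: covid_params
  assumes admissible: "admissible_params P"
begin

abbreviation "\<Lambda> \<equiv> c_Lambda P"
abbreviation "\<mu> \<equiv> c_mu P"
abbreviation "\<beta> \<equiv> c_beta P"
abbreviation "lH \<equiv> c_lH P"
abbreviation "\<phi> \<equiv> c_phi P"
abbreviation "\<upsilon> \<equiv> c_upsilon P"
abbreviation "\<delta>1 \<equiv> c_delta1 P"
abbreviation "\<delta>2 \<equiv> c_delta2 P"
abbreviation "\<eta> \<equiv> c_eta P"
abbreviation "\<omega> \<equiv> c_omega P"
abbreviation "\<alpha>1 \<equiv> c_alpha1 P"
abbreviation "\<alpha>2 \<equiv> c_alpha2 P"
abbreviation "pr \<equiv> c_p P"
abbreviation "qr \<equiv> c_q P"
abbreviation "f1 \<equiv> c_f1 P"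
abbreviation "f2 \<equiv> c_f2 P"
abbreviation "f3 \<equiv> c_f3 P"
abbreviation "\<kappa> \<equiv> c_kappa P"
abbreviation "mr \<equiv> c_m P"

lemma param_bounds:
  "\<Lambda> > 0" "\<mu> > 0" "\<beta> > 0" "lH > 0" "\<phi> > 0" "\<upsilon> > 0" "\<delta>1 > 0" "\<delta>2 > 0"
  "\<eta> > 0" "\<omega> > 0" "\<alpha>1 > 0" "\<alpha>2 > 0" "0 \<le> pr" "pr \<le> 1" "0 \<le> qr" "qr \<le> 1"
  "0 \<le> f1" "f1 \<le> 1" "0 \<le> f2" "f2 \<le> 1" "0 \<le> f3" "f3 \<le> 1" "0 \<le> \<kappa>" "\<kappa> \<le> 1"
  "0 \<le> mr" "mr \<le> 1" "0 \<le> 1 - f2 - f3"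
  using admissible unfolding admissible_params_def by auto

text \<open>The constants of the paper, plus \<open>bb = \<delta>2 f2\<close>, the rates \<open>e1\<close>, \<open>e2\<close> of the flows from \<open>I\<close> and \<open>H\<close>
  into \<open>Q\<close>, and \<open>c0\<close>, the value of the coefficient \<open>\<beta> (1 - p) S / N\<close> of the infection term at the
  disease-free equilibrium.\<close>
definition "qv = qr * \<upsilon>"
definition "a0 = qv + \<mu>"
definition "a1 = \<delta>1 + \<mu>"
definition "a2 = mr * \<omega> + \<mu>"
definition "e2 = \<delta>2 * (1 - f2 - f3)"
definition "bb = \<delta>2 * f2"
definition "a3 = e2 + bb + \<alpha>1 * f3 + \<mu>"
definition "a6 = \<delta>1 * (1 - f1)"
definition "ek = \<eta> * (1 - \<kappa>)"
definition "a7 = \<alpha>2 * \<kappa> + ek + \<mu>"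
definition "chi = a3 * a7 - bb * ek"
definition "e1 = \<delta>1 * f1"
definition "pp = pr * \<phi>"
definition "S0 = \<Lambda> * a2 / ((pp + a2) * \<mu>)"
definition "Q0 = pp * \<Lambda> / ((pp + a2) * \<mu>)"
definition "N0 = \<Lambda> / \<mu>"
definition "c0 = \<beta> * (1 - pr) * a2 / (pp + a2)"

definition "population X = pS X + pA X + pI X + pQ X + pH X + pC X"
definition "load X = pA X + pI X + lH * pH X"
definition "contact X = \<beta> * (1 - pr) * pS X / population X"

lemma constants_pos:
  "qv \<ge> 0" "a0 > 0" "a1 > 0" "a2 > 0" "a3 > 0" "a6 \<ge> 0" "ek \<ge> 0" "a7 > 0" "bb \<ge> 0" "chi > 0"
  "pp \<ge> 0" "c0 \<ge> 0" "S0 > 0" "Q0 \<ge> 0" "N0 > 0" "e1 \<ge> 0" "e2 \<ge> 0"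
proof -
  note p = param_bounds
  show "qv \<ge> 0" "a1 > 0" "a2 > 0" "a6 \<ge> 0" "ek \<ge> 0" "bb \<ge> 0" "pp \<ge> 0" "e1 \<ge> 0" "e2 \<ge> 0" "N0 > 0"
    unfolding qv_def a1_def a2_def a6_def ek_def bb_def pp_def e1_def e2_def N0_def using p
    by (simp_all add: add_nonneg_pos)
  then show "a0 > 0" "c0 \<ge> 0" "S0 > 0" "Q0 \<ge> 0" unfolding a0_def c0_def S0_def Q0_def using p by simp_all
  have a3: "a3 \<ge> bb + \<mu>" and a7: "a7 \<ge> ek + \<mu>"
    unfolding a3_def a7_def using p \<open>e2 \<ge> 0\<close> by simp_all
  then show "a3 > 0" "a7 > 0" using p \<open>bb \<ge> 0\<close> \<open>ek \<ge> 0\<close> by simp_all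
  have "a3 * a7 \<ge> (bb + \<mu>) * (ek + \<mu>)" using a3 a7 \<open>bb \<ge> 0\<close> \<open>ek \<ge> 0\<close> p by (intro mult_mono) auto
  moreover have "(bb + \<mu>) * (ek + \<mu>) = bb * ek + (bb * \<mu> + ek * \<mu> + \<mu> * \<mu>)" by (simp add: algebra_simps)
  moreover have "0 \<le> bb * \<mu>" "0 \<le> ek * \<mu>" "0 < \<mu> * \<mu>" using \<open>bb \<ge> 0\<close> \<open>ek \<ge> 0\<close> p by simp_all
  ultimately show "chi > 0" unfolding chi_def by linarith
qed

lemma pp_a2_pos: "pp + a2 > 0"
  using constants_pos by simp

lemma S0_plus_Q0: "S0 + Q0 = N0"
proof -
  have "S0 + Q0 = \<Lambda> * (pp + a2) / ((pp + a2) * \<mu>)"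
    unfolding S0_def Q0_def by (simp add: add_divide_distrib[symmetric] algebra_simps)
  also have "\<dots> = N0" unfolding N0_def using constants_pos by simp
  finally show ?thesis .
qed

lemma Lambda_eq: "\<Lambda> = \<mu> * S0 + \<mu> * Q0"
  using S0_plus_Q0 param_bounds unfolding N0_def by (simp add: field_simps)

lemma pp_S0: "pp * S0 = a2 * Q0"
  unfolding S0_def Q0_def by (simp add: algebra_simps)

lemma c0_eq: "c0 = \<beta> * (1 - pr) * (S0 / N0)"
proof -
  have "S0 / N0 = (\<Lambda> * a2 / ((pp + a2) * \<mu>)) / (\<Lambda> / \<mu>)" unfolding S0_def N0_def ..
  also have "\<dots> = a2 / (pp + a2)"
  proof -
    have "(\<Lambda> * a2 / (D * \<mu>)) / (\<Lambda> / \<mu>) = a2 / D" if "D > 0" for D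
      using that param_bounds(1,2) by (simp add: field_simps)
    then show ?thesis using pp_a2_pos by blast
  qed
  finally show ?thesis unfolding c0_def by simp
qed

lemma DFE_eq: "DFE P = (S0, 0, 0, Q0, 0, 0)"
  unfolding DFE_def S0_def Q0_def a2_def pp_def Let_def by (simp add: mult.commute)

lemma covid_field_eq:
  "covid_field P X = (\<Lambda> + \<omega> * mr * pQ X - (pp + \<mu>) * pS X - contact X * load X,
    contact X * load X - a0 * pA X, qv * pA X - a1 * pI X,
    pp * pS X + e1 * pI X + e2 * pH X - a2 * pQ X,
    a6 * pI X + ek * pC X - a3 * pH X, bb * pH X - a7 * pC X)"
proof -
  obtain S A I Q H C where X: "X = (S, A, I, Q, H, C)" by (metis prod.collapse)
  define L where "L = \<beta> * (A + I + lH * H) / (S + A + I + Q + H + C)"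
  have raw: "covid_field P X = (\<Lambda> + \<omega> * mr * Q - (L * (1 - pr) + \<phi> * pr + \<mu>) * S,
      L * (1 - pr) * S - (qr * \<upsilon> + \<mu>) * A, qr * \<upsilon> * A - (\<delta>1 + \<mu>) * I,
      \<phi> * pr * S + \<delta>1 * f1 * I + \<delta>2 * (1 - f2 - f3) * H - (\<omega> * mr + \<mu>) * Q,
      \<delta>1 * (1 - f1) * I + \<eta> * (1 - \<kappa>) * C - (\<delta>2 * (1 - f2 - f3) + \<delta>2 * f2 + \<alpha>1 * f3 + \<mu>) * H,
      \<delta>2 * f2 * H - (\<eta> * (1 - \<kappa>) + \<alpha>2 * \<kappa> + \<mu>) * C)"
    unfolding X covid_field_def Let_def L_def by simp
  have "L * (1 - pr) * S = contact X * load X"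
    unfolding L_def contact_def load_def population_def X
    by (simp add: times_divide_eq_left times_divide_eq_right mult_ac)
  then show ?thesis
    unfolding raw unfolding X
    by (simp add: qv_def a0_def a1_def a2_def pp_def e1_def e2_def a6_def ek_def a3_def bb_def a7_def
        algebra_simps)
qed

lemma R0_eq: "R0 P = c0 * (1 + qv / a1 + lH * a6 * qv * a7 / (a1 * chi)) / a0"
proof -
  have "R0 P = \<beta> * a2 * (1 - pr) * ((lH * a6 * qv + (a1 + qv) * a3) * a7 - bb * ek * (qv + a1))
      / (a0 * a1 * (a3 * a7 - bb * ek) * (pp + a2))"
    unfolding R0_def Let_def a0_def a1_def a2_def a3_def a6_def a7_def ek_def bb_def e2_def pp_def qv_def
    by (simp add: ac_simps)
  also have "(lH * a6 * qv + (a1 + qv) * a3) * a7 - bb * ek * (qv + a1) = lH * a6 * qv * a7 + (a1 + qv) * chi"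
    unfolding chi_def by (simp add: algebra_simps)
  also have "\<beta> * a2 * (1 - pr) * (lH * a6 * qv * a7 + (a1 + qv) * chi) / (a0 * a1 * (a3 * a7 - bb * ek) * (pp + a2))
      = c0 * (1 + qv / a1 + lH * a6 * qv * a7 / (a1 * chi)) / a0"
  proof -
    have "\<beta> * a2 * (1 - pr) * (lH * a6 * qv * a7 + (a1 + qv) * chi) / (a0 * a1 * chi * D)
        = \<beta> * (1 - pr) * a2 / D * (1 + qv / a1 + lH * a6 * qv * a7 / (a1 * chi)) / a0" if "D > 0" for D
      using that constants_pos by (simp add: field_simps)
    then show ?thesis using pp_a2_pos unfolding c0_def chi_def[symmetric] by blast
  qed
  finally show ?thesis .
qed

lemma dist_DFE_sq:
  "(dist X (DFE P))\<^sup>2 = (pS X - S0)\<^sup>2 + (pA X)\<^sup>2 + (pI X)\<^sup>2 + (pQ X - Q0)\<^sup>2 + (pH X)\<^sup>2 + (pC X)\<^sup>2"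
  unfolding dist_norm norm_state_sq proj_diff DFE_eq by simp

lemma DFE_equilibrium: "covid_field P (DFE P) = 0"
proof -
  have "load (DFE P) = 0" unfolding load_def DFE_eq by simp
  moreover have "\<Lambda> + \<omega> * mr * Q0 - (pp + \<mu>) * S0 = 0"
    using Lambda_eq pp_S0 unfolding a2_def by (simp add: algebra_simps)
  ultimately show ?thesis using pp_S0 unfolding covid_field_eq DFE_eq by (simp add: zero_prod_def)
qed

lemma contact_near_DFE:
  assumes "\<theta> > 0"
  obtains \<rho> where "\<rho> > 0" and "\<And>X. dist X (DFE P) \<le> \<rho> \<Longrightarrow>
    population X \<ge> N0 / 2 \<and> contact X \<ge> 0 \<and> \<bar>contact X - c0\<bar> \<le> \<theta>"
proof -
  have "continuous_on UNIV population" "continuous_on UNIV pS"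
    unfolding population_def by (intro continuous_intros)+
  then have cont: "isCont population (DFE P)" "isCont pS (DFE P)"
    using continuous_on_eq_continuous_at[OF open_UNIV] by blast+
  have at_DFE: "population (DFE P) = N0" "pS (DFE P) = S0" "contact (DFE P) = c0"
    unfolding population_def contact_def c0_eq DFE_eq using S0_plus_Q0 by simp_all
  have "isCont contact (DFE P)"
    unfolding contact_def using cont constants_pos at_DFE by (intro continuous_intros) auto
  moreover have "(f \<longlongrightarrow> f (DFE P)) (nhds (DFE P))" if "isCont f (DFE P)" for f :: "state \<Rightarrow> real"
    using that by (simp add: isCont_def tendsto_at_iff_tendsto_nhds)
  ultimately have lim: "(population \<longlongrightarrow> N0) (nhds (DFE P))" "(pS \<longlongrightarrow> S0) (nhds (DFE P))"
    "(contact \<longlongrightarrow> c0) (nhds (DFE P))"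
    using cont at_DFE by metis+
  have "\<forall>\<^sub>F X in nhds (DFE P). population X > N0 / 2"
    using order_tendstoD(1)[OF lim(1), of "N0 / 2"] constants_pos by simp
  moreover have "\<forall>\<^sub>F X in nhds (DFE P). pS X > 0" using order_tendstoD(1)[OF lim(2)] constants_pos by simp
  moreover have "\<forall>\<^sub>F X in nhds (DFE P). dist (contact X) c0 < \<theta>" using tendstoD[OF lim(3) assms] .
  ultimately have "\<forall>\<^sub>F X in nhds (DFE P). population X \<ge> N0 / 2 \<and> contact X \<ge> 0 \<and> \<bar>contact X - c0\<bar> \<le> \<theta>"
  proof eventually_elim
    case (elim X)
    moreover have "N0 / 2 > 0" using constants_pos by simp
    ultimately show ?case
      using param_bounds unfolding contact_def dist_real_def by (auto intro!: divide_nonneg_pos)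
  qed
  then show ?thesis using that unfolding eventually_nhds_metric_le by blast
qed

lemma covid_field_lipschitz_near_DFE:
  obtains r L where "r > 0" "L-lipschitz_on (cball (DFE P) r) (covid_field P)"
proof -
  obtain r where "r > 0" and near: "\<And>X. dist X (DFE P) \<le> r \<Longrightarrow>
      population X \<ge> N0 / 2 \<and> contact X \<ge> 0 \<and> \<bar>contact X - c0\<bar> \<le> 1"
    using contact_near_DFE[OF zero_less_one] by blast
  let ?U = "cball (DFE P) r"
  have "lipschitzian_on ?U (\<lambda>X. 1 / population X)"
    by (rule lipschitzian_on_inverse[of _ _ "N0 / 2"])
      (use near constants_pos in \<open>auto simp: population_def dist_commute
        intro!: lipschitzian_on_add lipschitzian_on_proj\<close>)
  then have "lipschitzian_on ?U (\<lambda>X. (\<beta> * (1 - pr) * pS X) * (1 / population X))"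
    by (intro lipschitzian_on_mult lipschitzian_on_cmult lipschitzian_on_proj) simp_all
  then have "lipschitzian_on ?U (\<lambda>X. contact X * load X)"
    unfolding contact_def load_def
    by (intro lipschitzian_on_mult lipschitzian_on_add lipschitzian_on_cmult lipschitzian_on_proj) simp_all
  then have "lipschitzian_on ?U (covid_field P)"
    unfolding covid_field_eq
    by (intro lipschitzian_on_Pair lipschitzian_on_add lipschitzian_on_diff lipschitzian_on_cmult
        lipschitzian_on_proj lipschitzian_on_const)
  then show ?thesis using that \<open>r > 0\<close> unfolding lipschitzian_on_def by blast
qed

section \<open>Stability for \<open>R0 < 1\<close>\<close>

text \<open>In the deviations \<open>u = (S + Q) - (S0 + Q0)\<close> and \<open>z = Q - Q0\<close> the non-infected equations are linear;
  the infection enters only through the term \<open>contact X * load X\<close>.\<close>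
lemma covid_field_noninfected:
  "pS (covid_field P X) + pQ (covid_field P X)
    = - \<mu> * (pS X - S0 + (pQ X - Q0)) - contact X * load X + e1 * pI X + e2 * pH X"
  "pQ (covid_field P X)
    = pp * ((pS X - S0 + (pQ X - Q0)) - (pQ X - Q0)) - a2 * (pQ X - Q0) + e1 * pI X + e2 * pH X"
proof -
  have "a2 * pQ X = \<omega> * mr * pQ X + \<mu> * pQ X" unfolding a2_def by (simp add: algebra_simps)
  then show "pS (covid_field P X) + pQ (covid_field P X)
    = - \<mu> * (pS X - S0 + (pQ X - Q0)) - contact X * load X + e1 * pI X + e2 * pH X"
    using Lambda_eq unfolding covid_field_eq by (simp add: algebra_simps)
  show "pQ (covid_field P X)
    = pp * ((pS X - S0 + (pQ X - Q0)) - (pQ X - Q0)) - a2 * (pQ X - Q0) + e1 * pI X + e2 * pH X"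
    using pp_S0 unfolding covid_field_eq by (simp add: algebra_simps)
qed

definition lyapunov_V :: "real \<Rightarrow> real \<Rightarrow> real \<Rightarrow> real \<Rightarrow> real \<Rightarrow> state \<Rightarrow> real" where
  "lyapunov_V dI dH dC \<gamma> g X = (pA X)\<^sup>2 + dI * (pI X)\<^sup>2 + dH * (pH X)\<^sup>2 + dC * (pC X)\<^sup>2
     + \<gamma> * ((pS X - S0 + (pQ X - Q0))\<^sup>2 + g * (pQ X - Q0)\<^sup>2)"

definition lyapunov_dV :: "real \<Rightarrow> real \<Rightarrow> real \<Rightarrow> real \<Rightarrow> real \<Rightarrow> state \<Rightarrow> state \<Rightarrow> real" where
  "lyapunov_dV dI dH dC \<gamma> g X Y =
     2 * (pA X * pA Y + dI * pI X * pI Y + dH * pH X * pH Y + dC * pC X * pC Y)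
     + \<gamma> * (2 * (pS X - S0 + (pQ X - Q0)) * (pS Y + pQ Y) + g * (2 * (pQ X - Q0) * pQ Y))"

lemma lyapunov_V_chain:
  assumes "(x has_vector_derivative Y) (at t)"
  shows "((\<lambda>t. lyapunov_V dI dH dC \<gamma> g (x t)) has_real_derivative lyapunov_dV dI dH dC \<gamma> g (x t) Y) (at t)"
  unfolding lyapunov_V_def lyapunov_dV_def
  by (rule derivative_eq_intros has_real_derivative_proj[OF assms] | simp)+ (simp add: algebra_simps)

lemma lyapunov_dV_field:
  "lyapunov_dV dI dH dC \<gamma> g X (covid_field P X) =
     2 * (pA X * (contact X * (pA X + pI X + lH * pH X) - a0 * pA X) + dI * pI X * (qv * pA X - a1 * pI X)
       + dH * pH X * (a6 * pI X + ek * pC X - a3 * pH X) + dC * pC X * (bb * pH X - a7 * pC X))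
     + \<gamma> * (2 * (pS X - S0 + (pQ X - Q0)) * (- \<mu> * (pS X - S0 + (pQ X - Q0))
         - contact X * (pA X + pI X + lH * pH X) + e1 * pI X + e2 * pH X)
       + 2 * g * (pQ X - Q0) * (pp * ((pS X - S0 + (pQ X - Q0)) - (pQ X - Q0)) - a2 * (pQ X - Q0)
         + e1 * pI X + e2 * pH X))"
  unfolding lyapunov_dV_def covid_field_noninfected(1) unfolding covid_field_noninfected(2)
  by (simp add: covid_field_eq load_def algebra_simps)

lemma lyapunov_function_near_DFE:
  assumes "R0 P < 1"
  obtains V dV \<rho> \<alpha> k K where "quadratic_lyapunov (covid_field P) (DFE P) V dV \<rho> \<alpha> k K"
proof -
  have "c0 * (1 + qv / a1 + lH * a6 * qv * a7 / (a1 * (a3 * a7 - bb * ek))) < a0"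
    using assms constants_pos unfolding R0_eq chi_def by (simp add: divide_less_eq)
  then obtain dI dH dC \<sigma> where weights: "dI > 0" "dH > 0" "dC > 0" "\<sigma> > 0"
    and quad: "\<And>A I H C. A * (c0 * (A + I + lH * H) - a0 * A) + dI * I * (qv * A - a1 * I)
      + dH * H * (a6 * I + ek * C - a3 * H) + dC * C * (bb * H - a7 * C) \<le> - \<sigma> * (A\<^sup>2 + I\<^sup>2 + H\<^sup>2 + C\<^sup>2)"
    using infected_diagonal_lyapunov[of c0 a0 a1 a3 a6 ek a7 qv lH bb] constants_pos param_bounds(4)
    unfolding chi_def by (metis less_imp_le)
  define g where "g = \<mu> / (pp + \<mu>)"
  have "g > 0" "g * pp \<le> \<mu>" unfolding g_def using param_bounds(2) constants_pos by (simp_all add: field_simps)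
  obtain \<theta> \<gamma> \<alpha> where "\<theta> > 0" "\<gamma> > 0" "\<alpha> > 0" and bound: "\<And>A I H C u z c. \<bar>c - c0\<bar> \<le> \<theta> \<Longrightarrow>
      2 * (A * (c * (A + I + lH * H) - a0 * A) + dI * I * (qv * A - a1 * I)
        + dH * H * (a6 * I + ek * C - a3 * H) + dC * C * (bb * H - a7 * C))
      + \<gamma> * (2 * u * (- \<mu> * u - c * (A + I + lH * H) + e1 * I + e2 * H)
        + 2 * g * z * (pp * (u - z) - a2 * z + e1 * I + e2 * H))
      \<le> - \<alpha> * (A\<^sup>2 + dI * I\<^sup>2 + dH * H\<^sup>2 + dC * C\<^sup>2 + \<gamma> * (u\<^sup>2 + g * z\<^sup>2))"
    using infected_lyapunov_derivative_bound[OF weights _ _ _ _ _ _ _ \<open>g > 0\<close> \<open>g * pp \<le> \<mu>\<close> quad]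
      param_bounds constants_pos by (metis less_imp_le)
  obtain \<rho> where "\<rho> > 0" and near: "\<And>X. dist X (DFE P) \<le> \<rho> \<Longrightarrow>
      population X \<ge> N0 / 2 \<and> contact X \<ge> 0 \<and> \<bar>contact X - c0\<bar> \<le> \<theta>"
    using contact_near_DFE[OF \<open>\<theta> > 0\<close>] by blast
  obtain k K where "k > 0" "K > 0"
    and equiv: "\<And>s A I z H C. k * (s\<^sup>2 + A\<^sup>2 + I\<^sup>2 + z\<^sup>2 + H\<^sup>2 + C\<^sup>2)
      \<le> A\<^sup>2 + dI * I\<^sup>2 + dH * H\<^sup>2 + dC * C\<^sup>2 + \<gamma> * ((s + z)\<^sup>2 + g * z\<^sup>2)"
      "\<And>s A I z H C. A\<^sup>2 + dI * I\<^sup>2 + dH * H\<^sup>2 + dC * C\<^sup>2 + \<gamma> * ((s + z)\<^sup>2 + g * z\<^sup>2)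
      \<le> K * (s\<^sup>2 + A\<^sup>2 + I\<^sup>2 + z\<^sup>2 + H\<^sup>2 + C\<^sup>2)"
    using lyapunov_form_equivalence[OF weights(1-3) \<open>\<gamma> > 0\<close> \<open>g > 0\<close>] by blast
  have "quadratic_lyapunov (covid_field P) (DFE P) (lyapunov_V dI dH dC \<gamma> g) (lyapunov_dV dI dH dC \<gamma> g)
      \<rho> \<alpha> k K"
  proof
    show "k * (dist X (DFE P))\<^sup>2 \<le> lyapunov_V dI dH dC \<gamma> g X" for X
      using equiv(1)[where s = "pS X - S0" and A = "pA X" and I = "pI X" and z = "pQ X - Q0"
          and H = "pH X" and C = "pC X"]
      unfolding dist_DFE_sq lyapunov_V_def by (simp add: algebra_simps)
    show "lyapunov_V dI dH dC \<gamma> g X \<le> K * (dist X (DFE P))\<^sup>2" for X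
      using equiv(2)[where s = "pS X - S0" and A = "pA X" and I = "pI X" and z = "pQ X - Q0"
          and H = "pH X" and C = "pC X"]
      unfolding dist_DFE_sq lyapunov_V_def by (simp add: algebra_simps)
    show "continuous_on UNIV (lyapunov_V dI dH dC \<gamma> g)"
      unfolding lyapunov_V_def by (intro continuous_intros)
    show "((\<lambda>t. lyapunov_V dI dH dC \<gamma> g (x t)) has_real_derivative lyapunov_dV dI dH dC \<gamma> g (x t) Y) (at t)"
      if "(x has_vector_derivative Y) (at t)" for x t Y
      using that by (rule lyapunov_V_chain)
    show "lyapunov_dV dI dH dC \<gamma> g X (covid_field P X) \<le> - \<alpha> * lyapunov_V dI dH dC \<gamma> g X"
      if "dist X (DFE P) < \<rho>" for X
      unfolding lyapunov_dV_field lyapunov_V_def using that near by (intro bound) auto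
  qed (use \<open>\<rho> > 0\<close> \<open>\<alpha> > 0\<close> \<open>k > 0\<close> in auto)
  then show ?thesis by (rule that)
qed

theorem DFE_stable:
  assumes "R0 P < 1"
  shows "locally_asymptotically_stable (covid_field P) (DFE P)"
proof -
  obtain V dV \<rho> \<alpha> k K where "quadratic_lyapunov (covid_field P) (DFE P) V dV \<rho> \<alpha> k K"
    using lyapunov_function_near_DFE[OF assms] by blast
  then interpret quadratic_lyapunov "covid_field P" "DFE P" V dV \<rho> \<alpha> k K .
  obtain r L where "r > 0" "L-lipschitz_on (cball (DFE P) r) (covid_field P)"
    by (rule covid_field_lipschitz_near_DFE)
  then show ?thesis by (intro locally_asymptotically_stable DFE_equilibrium)
qed

section \<open>Instability for \<open>R0 > 1\<close>\<close>

lemma solution_deriv_at: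
  assumes "is_solution_on (covid_field P) {0..} x" "t > 0"
  shows "(x has_vector_derivative covid_field P (x t)) (at t)"
  using is_solution_on_interior[OF is_solution_on_subset[OF assms(1)], of "t + 1" t] assms(2) by auto

lemma infected_stay_positive:
  assumes sol: "is_solution_on (covid_field P) {0..} x"
    and contact_nonneg: "\<And>t. t \<ge> 0 \<Longrightarrow> contact (x t) \<ge> 0"
    and start: "pA (x 0) > 0" "pI (x 0) > 0" "pH (x 0) > 0" "pC (x 0) > 0"
    and "t \<ge> 0"
  shows "pA (x t) > 0 \<and> pI (x t) > 0 \<and> pH (x t) > 0 \<and> pC (x t) > 0"
proof (rule ccontr)
  define m where "m t = min (min (pA (x t)) (pI (x t))) (min (pH (x t)) (pC (x t)))" for t
  assume "\<not> ?thesis"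
  then have "- m 0 < 0" "0 \<le> - m t" using start unfolding m_def by auto
  moreover have x_cont: "continuous_on {0..T} x" for T
    by (rule is_solution_on_continuous[OF is_solution_on_subset[OF sol]]) auto
  then have comp_cont: "continuous_on {0..T} (\<lambda>s. p (x s))" if "continuous_on UNIV p" for p :: "state \<Rightarrow> real" and T
    by (rule continuous_on_compose2[OF that]) auto
  then have "continuous_on {0..t} (\<lambda>s. - m s)" unfolding m_def
    by (intro continuous_intros comp_cont continuous_on_proj)
  ultimately have "\<exists>\<tau>\<in>{0..t}. 0 < \<tau> \<and> - m \<tau> = 0 \<and> (\<forall>s\<in>{0..<\<tau>}. - m s < 0)"
    by (intro first_crossing[OF \<open>t \<ge> 0\<close>])
  then obtain \<tau> where "\<tau> \<in> {0..t}" "- m \<tau> = 0" and before: "\<forall>s\<in>{0..<\<tau>}. - m s < 0"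
    by blast
  have pos: "pA (x s) \<ge> 0" "pI (x s) \<ge> 0" "pH (x s) \<ge> 0" "pC (x s) \<ge> 0" if "0 < s" "s < \<tau>" for s
  proof -
    have "s \<in> {0..<\<tau>}" using that by simp
    then have "- m s < 0" using before by blast
    then show "pA (x s) \<ge> 0" "pI (x s) \<ge> 0" "pH (x s) \<ge> 0" "pC (x s) \<ge> 0" unfolding m_def by auto
  qed
  have grow: "p (x \<tau>) > 0"
    if "continuous_on UNIV p" "p (x 0) > 0"
      and "\<And>s. 0 < s \<Longrightarrow> ((\<lambda>t. p (x t)) has_real_derivative p (covid_field P (x s))) (at s)"
      and "\<And>s. 0 < s \<Longrightarrow> s < \<tau> \<Longrightarrow> p (covid_field P (x s)) \<ge> - k * p (x s)"
    for p :: "state \<Rightarrow> real" and k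
  proof -
    have "p (x \<tau>) \<ge> p (x 0) * exp (- k * (\<tau> - 0))"
    proof (rule exp_bound_of_deriv_ge)
      show "continuous_on {0..\<tau>} (\<lambda>t. p (x t))" by (rule comp_cont[OF that(1)])
    qed (use \<open>\<tau> \<in> {0..t}\<close> that(3,4) in auto)
    moreover have "p (x 0) * exp (- k * (\<tau> - 0)) > 0" using that(2) by simp
    ultimately show ?thesis by linarith
  qed
  note deriv = has_real_derivative_proj[OF solution_deriv_at[OF sol]]
  have "pA (x \<tau>) > 0"
  proof (rule grow[of _ a0])
    fix s assume "0 < s" "s < \<tau>"
    then have "contact (x s) * load (x s) \<ge> 0"
      using pos contact_nonneg param_bounds(4) unfolding load_def by (simp add: add_nonneg_nonneg)
    then show "pA (covid_field P (x s)) \<ge> - a0 * pA (x s)" unfolding covid_field_eq by simp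
  qed (simp_all add: continuous_on_proj start deriv)
  moreover have "pI (x \<tau>) > 0"
  proof (rule grow[of _ a1])
    fix s assume "0 < s" "s < \<tau>"
    then show "pI (covid_field P (x s)) \<ge> - a1 * pI (x s)"
      using pos constants_pos unfolding covid_field_eq by simp
  qed (simp_all add: continuous_on_proj start deriv)
  moreover have "pH (x \<tau>) > 0"
  proof (rule grow[of _ a3])
    fix s assume "0 < s" "s < \<tau>"
    then show "pH (covid_field P (x s)) \<ge> - a3 * pH (x s)"
      using pos constants_pos unfolding covid_field_eq by simp
  qed (simp_all add: continuous_on_proj start deriv)
  moreover have "pC (x \<tau>) > 0"
  proof (rule grow[of _ a7])
    fix s assume "0 < s" "s < \<tau>"
    then show "pC (covid_field P (x s)) \<ge> - a7 * pC (x s)"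
      using pos constants_pos unfolding covid_field_eq by simp
  qed (simp_all add: continuous_on_proj start deriv)
  ultimately show False using \<open>- m \<tau> = 0\<close> unfolding m_def by linarith
qed

lemma growth_functional_exp_bound:
  assumes sol: "is_solution_on (covid_field P) {0..} x"
    and "r > 0" "uI > 0" "uH > 0" "uC \<ge> 0" and gap: "c0 - a0 + qv * uI > r"
    and ident: "\<And>A I H C c. (c * (A + I + lH * H) - a0 * A) + uI * (qv * A - a1 * I)
        + uH * (a6 * I + ek * C - a3 * H) + uC * (bb * H - a7 * C)
      = (c0 - a0 + qv * uI) * A + r * (uI * I + uH * H + uC * C) + (c - c0) * (A + I + lH * H)"
    and close: "\<And>t. t \<ge> 0 \<Longrightarrow> \<bar>contact (x t) - c0\<bar> * (1 + 1 / uI + lH / uH) \<le> r / 2"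
    and pos: "\<And>t. t \<ge> 0 \<Longrightarrow> pA (x t) > 0 \<and> pI (x t) > 0 \<and> pH (x t) > 0 \<and> pC (x t) > 0"
    and "t \<ge> 0"
  shows "pA (x t) + uI * pI (x t) + uH * pH (x t) + uC * pC (x t)
    \<ge> (pA (x 0) + uI * pI (x 0) + uH * pH (x 0) + uC * pC (x 0)) * exp (r / 2 * t)"
proof -
  define W where "W t = pA (x t) + uI * pI (x t) + uH * pH (x t) + uC * pC (x t)" for t
  have "W t \<ge> W 0 * exp (r / 2 * (t - 0))"
  proof (rule exp_bound_of_deriv_ge[OF \<open>t \<ge> 0\<close>])
    show "continuous_on {0..t} W"
      unfolding W_def using is_solution_on_continuous[OF is_solution_on_subset[OF sol]]
      by (intro continuous_intros continuous_on_compose2[OF continuous_on_proj(2)]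
          continuous_on_compose2[OF continuous_on_proj(3)] continuous_on_compose2[OF continuous_on_proj(5)]
          continuous_on_compose2[OF continuous_on_proj(6)]) auto
    fix s assume "0 < s" "s < t"
    let ?X = "x s" and ?F = "covid_field P (x s)"
    have "(W has_real_derivative pA ?F + uI * pI ?F + uH * pH ?F + uC * pC ?F) (at s)"
      unfolding W_def using has_real_derivative_proj[OF solution_deriv_at[OF sol \<open>0 < s\<close>]]
      by (auto intro!: derivative_eq_intros)
    moreover have "pA ?F + uI * pI ?F + uH * pH ?F + uC * pC ?F \<ge> r / 2 * W s"
    proof -
      define h where "h = pA ?X + pI ?X + lH * pH ?X"
      have p: "pA ?X > 0" "pI ?X > 0" "pH ?X > 0" "pC ?X > 0" using pos \<open>0 < s\<close> by auto
      have eq: "pA ?F + uI * pI ?F + uH * pH ?F + uC * pC ?F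
          = (c0 - a0 + qv * uI) * pA ?X + r * (uI * pI ?X + uH * pH ?X + uC * pC ?X) + (contact ?X - c0) * h"
        unfolding covid_field_eq h_def load_def by (simp add: ident)
      have A_term: "(c0 - a0 + qv * uI) * pA ?X \<ge> r * pA ?X" using gap p by (intro mult_right_mono) auto
      have h_le: "h \<le> (1 + 1 / uI + lH / uH) * W s"
      proof -
        have "uC * pC ?X \<ge> 0" "uI * pI ?X > 0" "uH * pH ?X > 0" using p \<open>uC \<ge> 0\<close> \<open>uI > 0\<close> \<open>uH > 0\<close> by simp_all
        then have "pA ?X \<le> W s" "uI * pI ?X \<le> W s" "uH * pH ?X \<le> W s" unfolding W_def using p by linarith+
        then have "pI ?X \<le> W s / uI" "lH * pH ?X \<le> lH * (W s / uH)"
          using \<open>uI > 0\<close> \<open>uH > 0\<close> param_bounds(4) by (simp_all add: field_simps)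
        then show ?thesis using \<open>pA ?X \<le> W s\<close> unfolding h_def by (simp add: algebra_simps)
      qed
      have "W s \<ge> 0" unfolding W_def using p \<open>uI > 0\<close> \<open>uH > 0\<close> \<open>uC \<ge> 0\<close> by simp
      have "\<bar>contact ?X - c0\<bar> * h \<le> \<bar>contact ?X - c0\<bar> * ((1 + 1 / uI + lH / uH) * W s)"
        using h_le by (intro mult_left_mono) auto
      also have "\<dots> = (\<bar>contact ?X - c0\<bar> * (1 + 1 / uI + lH / uH)) * W s" by (simp add: mult.assoc)
      also have "\<dots> \<le> r / 2 * W s" using close[of s] \<open>0 < s\<close> \<open>W s \<ge> 0\<close> by (intro mult_right_mono) auto
      finally have "\<bar>contact ?X - c0\<bar> * h \<le> r / 2 * W s" .
      then have perturbation: "(contact ?X - c0) * h \<ge> - (r / 2 * W s)"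
        using abs_ge_minus_self[of "(contact ?X - c0) * h"] p param_bounds(4) unfolding h_def
        by (simp add: abs_mult)
      have "r * W s = r * pA ?X + r * (uI * pI ?X + uH * pH ?X + uC * pC ?X)"
        unfolding W_def by (simp add: algebra_simps)
      then show ?thesis using eq A_term perturbation by linarith
    qed
    ultimately show "\<exists>d. (W has_real_derivative d) (at s) \<and> d \<ge> r / 2 * W s" by blast
  qed
  then show ?thesis unfolding W_def by simp
qed

lemma weighted_infected_less:
  assumes "dist X (DFE P) < \<epsilon>" "uI \<ge> 0" "uH \<ge> 0" "uC \<ge> 0"
  shows "pA X + uI * pI X + uH * pH X + uC * pC X < (1 + uI + uH + uC) * \<epsilon>"
proof -
  have "\<bar>pA X\<bar> < \<epsilon>" "\<bar>pI X\<bar> < \<epsilon>" "\<bar>pH X\<bar> < \<epsilon>" "\<bar>pC X\<bar> < \<epsilon>"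
    using assms(1) abs_proj_le_norm[of "X - DFE P"] unfolding dist_norm proj_diff DFE_eq by auto
  then have "uI * pI X \<le> uI * \<epsilon>" "uH * pH X \<le> uH * \<epsilon>" "uC * pC X \<le> uC * \<epsilon>"
    using assms(2-4) by (intro mult_left_mono; simp)+
  then show ?thesis using \<open>\<bar>pA X\<bar> < \<epsilon>\<close> by (simp add: algebra_simps)
qed

theorem DFE_unstable:
  assumes "R0 P > 1"
  shows "unstable_equilibrium (covid_field P) (DFE P)"
proof -
  have above: "c0 * (1 + qv / a1 + lH * a6 * qv * a7 / (a1 * (a3 * a7 - bb * ek))) > a0"
    using assms constants_pos unfolding R0_eq chi_def by (simp add: less_divide_eq)
  then have "c0 > 0" using constants_pos by (cases "c0 = 0") auto
  obtain r uI uH uC where "r > 0" "uI > 0" "uH > 0" "uC \<ge> 0" and gap: "c0 - a0 + qv * uI > r"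
    and ident: "\<And>A I H C c. (c * (A + I + lH * H) - a0 * A) + uI * (qv * A - a1 * I)
        + uH * (a6 * I + ek * C - a3 * H) + uC * (bb * H - a7 * C)
      = (c0 - a0 + qv * uI) * A + r * (uI * I + uH * H + uC * C) + (c - c0) * (A + I + lH * H)"
    using infected_growth_functional[OF \<open>c0 > 0\<close> param_bounds(4) _ _ _ _ _ _ _ _ _ above] constants_pos
    unfolding chi_def by blast
  define K where "K = 1 + 1 / uI + lH / uH"
  have "K > 0" unfolding K_def using \<open>uI > 0\<close> \<open>uH > 0\<close> param_bounds(4) by (simp add: add_pos_nonneg)
  obtain \<rho> where "\<rho> > 0" and near: "\<And>X. dist X (DFE P) \<le> \<rho> \<Longrightarrow>
      population X \<ge> N0 / 2 \<and> contact X \<ge> 0 \<and> \<bar>contact X - c0\<bar> \<le> r / (2 * K)"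
    using contact_near_DFE[of "r / (2 * K)"] \<open>r > 0\<close> \<open>K > 0\<close> by auto
  obtain r' L where "r' > 0" and lip: "L-lipschitz_on (cball (DFE P) r') (covid_field P)"
    by (rule covid_field_lipschitz_near_DFE)
  define \<epsilon> where "\<epsilon> = min \<rho> r'"
  have "\<epsilon> > 0" unfolding \<epsilon>_def using \<open>\<rho> > 0\<close> \<open>r' > 0\<close> by simp
  have "L-lipschitz_on (cball (DFE P) \<epsilon>) (covid_field P)"
    by (rule lipschitz_on_subset[OF lip]) (simp add: \<epsilon>_def subset_cball)
  then obtain G where agree: "\<And>X. dist X (DFE P) \<le> \<epsilon> \<Longrightarrow> G X = covid_field P X"
    and G_sol: "\<And>x0. \<exists>x. x 0 = x0 \<and> is_solution_on G {0..} x"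
    using lipschitz_truncation_global_solutions \<open>\<epsilon> > 0\<close> less_imp_le by metis
  show ?thesis unfolding unstable_equilibrium_def
  proof (intro conjI notI DFE_equilibrium)
    assume "lyapunov_stable (covid_field P) (DFE P)"
    then obtain \<delta> where "\<delta> > 0" and stays: "\<And>x t. is_solution_on G {0..} x \<Longrightarrow> dist (x 0) (DFE P) < \<delta>
        \<Longrightarrow> t \<ge> 0 \<Longrightarrow> dist (x t) (DFE P) < \<epsilon>"
      using lyapunov_stable_truncation_stays_close[of "covid_field P" "DFE P" \<epsilon> G, OF _ \<open>\<epsilon> > 0\<close> agree]
      by blast
    define a where "a = min \<delta> \<epsilon> / 4"
    have "a > 0" "2 * a < \<delta>" unfolding a_def using \<open>\<delta> > 0\<close> \<open>\<epsilon> > 0\<close> by auto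
    obtain x where x0: "x 0 = (S0, a, a, Q0, a, a)" and sol_G: "is_solution_on G {0..} x" using G_sol by blast
    have "(dist (x 0) (DFE P))\<^sup>2 = (2 * a)\<^sup>2" unfolding dist_DFE_sq x0 by (simp add: power2_eq_square)
    then have "dist (x 0) (DFE P) = 2 * a"
      by (rule power2_eq_imp_eq[OF _ zero_le_dist]) (use \<open>a > 0\<close> in simp)
    then have "dist (x 0) (DFE P) < \<delta>" using \<open>2 * a < \<delta>\<close> by simp
    then have in_ball: "dist (x t) (DFE P) < \<epsilon>" if "t \<ge> 0" for t using stays[OF sol_G _ that] by blast
    then have sol: "is_solution_on (covid_field P) {0..} x"
      by (intro is_solution_on_transfer[OF sol_G] agree) (simp add: less_imp_le)
    have near_x: "contact (x t) \<ge> 0" "\<bar>contact (x t) - c0\<bar> * K \<le> r / 2" if "t \<ge> 0" for t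
      using near[of "x t"] in_ball[OF that] \<open>K > 0\<close> unfolding \<epsilon>_def by (auto simp: field_simps)
    have pos: "pA (x t) > 0 \<and> pI (x t) > 0 \<and> pH (x t) > 0 \<and> pC (x t) > 0" if "t \<ge> 0" for t
      using infected_stay_positive[OF sol near_x(1) _ _ _ _ that] \<open>a > 0\<close> unfolding x0 by simp
    define W0 where "W0 = a * (1 + uI + uH + uC)"
    have "W0 > 0" unfolding W0_def using \<open>a > 0\<close> \<open>uI > 0\<close> \<open>uH > 0\<close> \<open>uC \<ge> 0\<close> by (simp add: add_pos_nonneg)
    then obtain t where "t \<ge> 0" and big: "W0 * exp (r / 2 * t) > (1 + uI + uH + uC) * \<epsilon>"
      using exp_growth_exceeds[of W0 "r / 2"] \<open>r > 0\<close> by auto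
    have "pA (x t) + uI * pI (x t) + uH * pH (x t) + uC * pC (x t) \<ge> W0 * exp (r / 2 * t)"
      using growth_functional_exp_bound[OF sol \<open>r > 0\<close> \<open>uI > 0\<close> \<open>uH > 0\<close> \<open>uC \<ge> 0\<close> gap ident
          near_x(2)[unfolded K_def] pos \<open>t \<ge> 0\<close>]
      unfolding x0 W0_def by (simp add: algebra_simps)
    moreover have "pA (x t) + uI * pI (x t) + uH * pH (x t) + uC * pC (x t) < (1 + uI + uH + uC) * \<epsilon>"
      using weighted_infected_less[OF in_ball[OF \<open>t \<ge> 0\<close>]] \<open>uI > 0\<close> \<open>uH > 0\<close> \<open>uC \<ge> 0\<close> by simp
    ultimately show False using big by linarith
  qed
qed

end

theorem mainTheorem2:
  assumes "admissible_params P"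
  shows "(R0 P < 1 \<longrightarrow> locally_asymptotically_stable (covid_field P) (DFE P)) \<and>
         (R0 P > 1 \<longrightarrow> unstable_equilibrium (covid_field P) (DFE P))"
proof -
  interpret covid P by (rule covid.intro) (rule assms)
  show ?thesis using DFE_stable DFE_unstable by blast
qed

end
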